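(* For an edge $t \overset{k}{—} t'$ in $\mathbb{T}_n$ and $\varepsilon\in \{\pm 1\}$, we have \[ \mu_{k;t}=\psi_{k;t}(\mathbf{\hat{Y}}_{k;t}^{\varepsilon})^{\varepsilon}\circ\phi_{k;t;\varepsilon}, \] where $\phi_{k;t;\varepsilon}$ is the unique $\mathbb{Z}[q^{\pm\frac{1}{2}}]$-algebra isomorphism from $\mathcal{F}_{t'}$ to $\mathcal{F}_{t}$ taking $\mathbf{X}_{t'}(\alpha)$ to $\mathbf{X}_{t}(E_{k,\varepsilon}^{\tilde{B}_{t}R}\alpha)$ for any $\alpha\in\mathbb{Z}^{m}$.
   Context: Setting: generalized quantum cluster algebras. Fix integers $m\ge n\ge 1$ and mutation data $(R,\mathbf{h})$: $R=\operatorname{diag}\{r_1,\dots,r_n\}$ with positive integers $r_k$, and for each $k\in[1,n]$ elements $h_{k,0}(q^{\frac12}),\dots,h_{k,r_k}(q^{\frac12})\in\mathbb{Z}[q^{\pm\frac12}]$ with $h_{k,s}=h_{k,r_k-s}$ and $h_{k,0}=h_{k,r_k}=1$. A compatible pair $(\tilde B,\Lambda)$ consists of an integer $m\times n$ matrix $\tilde B=(b_{ij})$ and a skew-symmetric integer $m\times m$ matrix $\Lambda=(\lambda_{ij})$ with $\tilde B^T\Lambda=[D\ 0]$, where $D=\operatorname{diag}\{d_1^{-1},\dots,d_n^{-1}\}$ has positive integer diagonal entries. $E_{k,\varepsilon}^{\tilde BR}$ is the $m\times m$ matrix equal to the identity except in its $k$-th column, whose entries are $-1$ in row $k$ and $[-\varepsilon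 b_{ik}r_k]_+$ in row $i\neq k$ (here $[b]_+=\max(b,0)$, applied entrywise to vectors). An $(R,\mathbf h)$-quantum seed pattern $t\mapsto\Sigma_t=(\mathbf X_t,\tilde B_t,\Lambda_t)$ over the $n$-regular tree $\mathbb{T}_n$ is fixed; for $\alpha=(a_1,\dots,a_m)^T\in\mathbb{Z}^m$, $\mathbf X_t(\alpha)=q^{\frac12\sum_{i<j}a_ia_j\lambda_{ji;t}}X_{1;t}^{a_1}\cdots X_{m;t}^{a_m}$, so $\mathbf X_t(\alpha)\mathbf X_t(\beta)=q^{\frac12\alpha^T\Lambda_t\beta}\mathbf X_t(\alpha+\beta)$. $\mathcal{T}_t$ is the quantum torus ($\mathbb{Z}[q^{\pm\frac12}]$-algebra spanned by the $\mathbf X_t(\alpha)$) and $\mathcal F_t$ its skew field of fractions. For $\alpha\in\mathbb{Z}^n$, $\hat{\mathbf Y}_t^\alpha:=\mathbf X_t(\tilde B_t\alpha)$ and $\hat{\mathbf Y}_{k;t}:=\hat{\mathbf Y}_t^{f_k}$ ($f_1,\dots,f_n$ standard basis of $\mathbb{Z}^n$; $e_1,\dots,e_m$ standard basis of $\mathbb{Z}^m$). For an edge $t\overset{k}{—}t'$, $\mu_{k;t}:\mathcal F_{t'}\to\mathcal F_t$ is the $\mathbb{Z}[q^{\pm\frac12}]$-algebra isomorphism with $\mu_{k;t}(\mathbf X_{t'}(e_i))=\mathbf X_t(e_i)$ for $i\ne k$ and $\mu_{k;t}(\mathbf X_{t'}(e_k))=\sum_{s=0}^{r_k}h_{k,s}(q^{\frac12})\mathbf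 X_t(s[\varepsilon\mathbf b_k]_++(r_k-s)[-\varepsilon\mathbf b_k]_+-e_k)$, $\mathbf b_k$ the $k$-th column of $\tilde B_t$ (independent of $\varepsilon$). For $a\in\mathbb{Z}$: $(\sum_{s=0}^{r_k}h_{k,s}(q^{\frac12})(q^{\frac b2}z)^s)^{\{a\}}$ is $\prod_{i=1}^a\sum_s h_{k,s}(q^{\frac12})(q^{\frac{b(2i-1)}2}z)^s$ if $a>0$, $1$ if $a=0$, and $\prod_{i=a}^{-1}(\sum_s h_{k,s}(q^{\frac12})(q^{\frac{b(2i+1)}2}z)^s)^{-1}$ if $a<0$; the exponent $-\{a\}$ denotes the inverse of this. With $(\mathbf u,\mathbf v)_D=\mathbf u^TD\mathbf v$ and $\bar\beta\in\mathbb{Z}^n$ the truncation of $\beta\in\mathbb{Z}^m$ to its first $n$ coordinates, $\psi_{k;t}(\hat{\mathbf Y}_t^\alpha):\mathcal F_t\to\mathcal F_t$ is the $\mathbb{Z}[q^{\pm\frac12}]$-algebra automorphism $\mathbf X_t(\beta)\mapsto\mathbf X_t(\beta)(\sum_{s=0}^{r_k}h_{k,s}(q^{\frac12})(q^{\frac1{2d_k}}\hat{\mathbf Y}_t^\alpha)^s)^{-\{d_k(\bar\beta,\alpha)_D\}}$; $\psi^{\varepsilon}$ means $\psi$ for $\varepsilon=1$ and its inverse for $\varepsilon=-1$. *)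

theory Defs
  imports Main
begin

text \<open>Indices are 0-based: rows/coordinates i < m, mutable indices k < n.
  Integer vectors in Z^m are functions nat => int vanishing at i >= m.
  Integer matrices are functions nat => nat => int (only entries below the bounds matter).
  The element v plays the role of q^(1/2).  Elements of Z[q^(+-1/2)] are finitely supported
  coefficient functions c :: int => int, c j being the coefficient of q^(j/2).\<close>

definition Zm :: "nat \<Rightarrow> (nat \<Rightarrow> int) set" where
  "Zm m = {\<alpha>. \<forall>i\<ge>m. \<alpha> i = 0}"

definition unitvec :: "nat \<Rightarrow> nat \<Rightarrow> int" where
  "unitvec i = (\<lambda>j. if j = i then 1 else 0)"

definition pospart :: "(nat \<Rightarrow> int) \<Rightarrow> nat \<Rightarrow> int" where
  "pospart \<alpha> = (\<lambda>i. max (\<alpha> i) 0)"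

definition col :: "nat \<Rightarrow> (nat \<Rightarrow> nat \<Rightarrow> int) \<Rightarrow> nat \<Rightarrow> nat \<Rightarrow> int" where
  "col m B k = (\<lambda>i. if i < m then B i k else 0)"

definition mulv :: "nat \<Rightarrow> (nat \<Rightarrow> nat \<Rightarrow> int) \<Rightarrow> (nat \<Rightarrow> int) \<Rightarrow> nat \<Rightarrow> int" where
  "mulv m M \<alpha> = (\<lambda>i. if i < m then (\<Sum>j<m. M i j * \<alpha> j) else 0)"

definition Emat :: "(nat \<Rightarrow> nat \<Rightarrow> int) \<Rightarrow> (nat \<Rightarrow> nat) \<Rightarrow> nat \<Rightarrow> int \<Rightarrow> nat \<Rightarrow> nat \<Rightarrow> int" where
  "Emat B r k \<epsilon> = (\<lambda>i j. if j = k then (if i = k then -1 else max (- \<epsilon> * B i k * int (r k)) 0)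
                          else (if i = j then 1 else 0))"

definition transp :: "(nat \<Rightarrow> nat \<Rightarrow> int) \<Rightarrow> nat \<Rightarrow> nat \<Rightarrow> int" where
  "transp M = (\<lambda>i j. M j i)"

definition matmul :: "nat \<Rightarrow> (nat \<Rightarrow> nat \<Rightarrow> int) \<Rightarrow> (nat \<Rightarrow> nat \<Rightarrow> int) \<Rightarrow> nat \<Rightarrow> nat \<Rightarrow> int" where
  "matmul m M N = (\<lambda>i j. \<Sum>l<m. M i l * N l j)"

text \<open>Compatible pair (B~, Lambda) with B~^T Lambda = [D 0], D = diag(delta_1..delta_n),
  delta_k = d_k^{-1} positive integers.\<close>
definition compatible_pair ::
  "nat \<Rightarrow> nat \<Rightarrow> (nat \<Rightarrow> nat \<Rightarrow> int) \<Rightarrow> (nat \<Rightarrow> nat \<Rightarrow> int) \<Rightarrow> (nat \<Rightarrow> int) \<Rightarrow> bool" where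
  "compatible_pair m n B \<Lambda> \<delta> \<longleftrightarrow>
     (\<forall>i<m. \<forall>j<m. \<Lambda> i j = - \<Lambda> j i) \<and> (\<forall>k<n. \<delta> k > 0) \<and>
     (\<forall>k<n. \<forall>j<m. (\<Sum>i<m. B i k * \<Lambda> i j) = (if j = k then \<delta> k else 0))"

definition mutation_data :: "nat \<Rightarrow> (nat \<Rightarrow> nat) \<Rightarrow> (nat \<Rightarrow> nat \<Rightarrow> int \<Rightarrow> int) \<Rightarrow> bool" where
  "mutation_data n r h \<longleftrightarrow>
     (\<forall>k<n. r k \<ge> 1 \<and> (\<forall>s\<le>r k. finite {j. h k s j \<noteq> 0}) \<and>
            (\<forall>s\<le>r k. h k s = h k (r k - s)) \<and>
            h k 0 = (\<lambda>j. if j = 0 then 1 else 0) \<and> h k (r k) = (\<lambda>j. if j = 0 then 1 else 0))"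

definition lev :: "'a::division_ring \<Rightarrow> (int \<Rightarrow> int) \<Rightarrow> 'a" where
  "lev v c = (\<Sum>j\<in>{j. c j \<noteq> 0}. of_int (c j) * v powi j)"

definition Xmon :: "'a::division_ring \<Rightarrow> nat \<Rightarrow> (nat \<Rightarrow> nat \<Rightarrow> int) \<Rightarrow> (nat \<Rightarrow> 'a) \<Rightarrow> (nat \<Rightarrow> int) \<Rightarrow> 'a" where
  "Xmon v m \<Lambda> X \<alpha> =
     v powi (\<Sum>j<m. \<Sum>i<j. \<alpha> i * \<alpha> j * \<Lambda> j i) * prod_list (map (\<lambda>i. X i powi \<alpha> i) [0..<m])"

text \<open>The division ring F is (an isomorphic copy of) the skew field of fractions of the quantum
  torus with quasi-commutation matrix Lambda over Z[q^(+-1/2)], q^(1/2) = v, with cluster X: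
  v central and nonzero, X_i X_j = q^(lambda_ij) X_j X_i, the elements v^j X(alpha) are
  Z-linearly independent (so the span is the quantum torus), and F is generated as a
  division ring by v and the X_i.\<close>
definition qtorus_frac :: "'a::division_ring \<Rightarrow> nat \<Rightarrow> (nat \<Rightarrow> nat \<Rightarrow> int) \<Rightarrow> (nat \<Rightarrow> 'a) \<Rightarrow> bool" where
  "qtorus_frac v m \<Lambda> X \<longleftrightarrow>
     v \<noteq> 0 \<and> (\<forall>y. v * y = y * v) \<and> (\<forall>i<m. X i \<noteq> 0) \<and>
     (\<forall>i<m. \<forall>j<m. X i * X j = v powi (2 * \<Lambda> i j) * X j * X i) \<and>
     (\<forall>S c. finite S \<longrightarrow> S \<subseteq> UNIV \<times> Zm m \<longrightarrow>
        (\<Sum>p\<in>S. of_int (c p) * v powi (fst p) * Xmon v m \<Lambda> X (snd p)) = 0 \<longrightarrow>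
        (\<forall>p\<in>S. c p = 0)) \<and>
     (\<forall>A. 0 \<in> A \<longrightarrow> 1 \<in> A \<longrightarrow> (\<forall>x\<in>A. \<forall>y\<in>A. x + y \<in> A \<and> x * y \<in> A) \<longrightarrow>
          (\<forall>x\<in>A. - x \<in> A \<and> inverse x \<in> A) \<longrightarrow> v \<in> A \<longrightarrow> (\<forall>i<m. X i \<in> A) \<longrightarrow> A = UNIV)"

text \<open>Z[q^(+-1/2)]-algebra homomorphism between division rings (q^(1/2) = v resp. w).\<close>
definition alg_hom :: "'b::division_ring \<Rightarrow> 'a::division_ring \<Rightarrow> ('b \<Rightarrow> 'a) \<Rightarrow> bool" where
  "alg_hom w v f \<longleftrightarrow> (\<forall>x y. f (x + y) = f x + f y) \<and> (\<forall>x y. f (x * y) = f x * f y) \<and>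
                      f 1 = 1 \<and> f w = v"

definition alg_iso :: "'b::division_ring \<Rightarrow> 'a::division_ring \<Rightarrow> ('b \<Rightarrow> 'a) \<Rightarrow> bool" where
  "alg_iso w v f \<longleftrightarrow> alg_hom w v f \<and> bij f"

text \<open>(sum_{s=0}^{r} h_s (q^{b/2} z)^s)^{a} for integer a, with q^(1/2) = v.\<close>
definition hpow :: "'a::division_ring \<Rightarrow> nat \<Rightarrow> (nat \<Rightarrow> int \<Rightarrow> int) \<Rightarrow> int \<Rightarrow> 'a \<Rightarrow> int \<Rightarrow> 'a" where
  "hpow v r hk b z a =
     (let P = (\<lambda>e. \<Sum>s\<le>r. lev v (hk s) * (v powi e * z) ^ s) in
      if a > 0 then prod_list (map (\<lambda>i. P (b * (2 * i - 1))) [1..a])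
      else if a = 0 then 1
      else prod_list (map (\<lambda>i. inverse (P (b * (2 * i + 1)))) [a..-1]))"

text \<open>psi_{k;t}(Y_{k;t}^eps) (alpha = eps f_k): the automorphism
  X(beta) |-> X(beta) (sum_s h_{k,s} (q^{1/(2 d_k)} Y^eps)^s)^{-{d_k (beta-bar, eps f_k)_D}},
  where d_k (beta-bar, eps f_k)_D = eps * beta_k and q^{1/(2 d_k)} = v^{delta_k}.\<close>
definition is_psi :: "'a::division_ring \<Rightarrow> nat \<Rightarrow> (nat \<Rightarrow> nat \<Rightarrow> int) \<Rightarrow> (nat \<Rightarrow> 'a)
    \<Rightarrow> (nat \<Rightarrow> nat \<Rightarrow> int) \<Rightarrow> (nat \<Rightarrow> int) \<Rightarrow> (nat \<Rightarrow> nat) \<Rightarrow> (nat \<Rightarrow> nat \<Rightarrow> int \<Rightarrow> int)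
    \<Rightarrow> nat \<Rightarrow> int \<Rightarrow> ('a \<Rightarrow> 'a) \<Rightarrow> bool" where
  "is_psi v m \<Lambda> X B \<delta> r h k \<epsilon> \<psi> \<longleftrightarrow>
     alg_iso v v \<psi> \<and>
     (\<forall>\<beta>\<in>Zm m. \<psi> (Xmon v m \<Lambda> X \<beta>) =
        Xmon v m \<Lambda> X \<beta> *
        inverse (hpow v (r k) (h k) (\<delta> k) (Xmon v m \<Lambda> X (\<lambda>i. \<epsilon> * col m B k i)) (\<epsilon> * \<beta> k)))"

end

theory Submission
  imports Defs "HOL-Library.FuncSet"
begin

text \<open>Both sides of the identity are homomorphisms of division rings \<open>\<F>\<^bsub>t'\<^esub> \<rightarrow> \<F>\<^sub>t\<close> fixing
  \<open>q\<^bsup>1/2\<^esup>\<close>, and such homomorphisms are determined by their values on the cluster variables.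
  All maps involved fix \<open>X\<^sub>i\<close> for \<open>i \<noteq> k\<close>. The map \<open>\<phi>\<close> sends \<open>X\<^sub>k\<close> to the monomial
  \<open>X(E e\<^sub>k)\<close> with \<open>(E e\<^sub>k)\<^sub>k = -1\<close>, and \<open>\<psi>\<close> multiplies such a monomial by the exchange polynomial
  in \<open>q\<^bsup>1/(2d\<^sub>k)\<^esup> Y\<^sup>\<epsilon>\<close>. Moving \<open>X(\<beta>)\<close> past \<open>Y\<^sup>s\<close> costs a power of \<open>q\<close> that, by the
  compatibility \<open>B\<^sup>T \<Lambda> = [D 0]\<close>, exactly cancels these shifts, leaving the binomial-type sum that
  defines \<open>\<mu>(X\<^sub>k)\<close>; for \<open>\<epsilon> = -1\<close> the sum appears reversed, which the symmetry
  \<open>h\<^bsub>k,s\<^esub> = h\<^bsub>k,r\<^sub>k-s\<^esub>\<close> repairs.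

  The map \<open>\<phi>\<close> exists because \<open>X(\<alpha>) \<mapsto> X(E \<alpha>)\<close> is multiplicative on the quantum torus
  (\<open>E\<^sup>T \<Lambda> E = \<Lambda>'\<close> for both signs) and injective (\<open>E\<close> is an involution and the monomials
  are linearly independent), and the quantum torus is a right Ore domain, so the map extends to
  the skew field of fractions. The Ore condition is a counting argument: for \<open>a\<close>, \<open>s\<close> supported
  in a box of radius \<open>d\<close>, the equation \<open>a u = s w\<close> with \<open>u\<close>, \<open>w\<close> supported in a box of radius
  \<open>N\<close> is a homogeneous linear system over the Laurent polynomials in \<open>q\<^bsup>1/2\<^esup>\<close> whose unknowns
  outnumber its equations once \<open>N\<close> is large.\<close>


section \<open>Central elements and q-commuting elements\<close>

definition central :: "'a::ring_1 \<Rightarrow> bool" where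
  "central z \<longleftrightarrow> (\<forall>y. z * y = y * z)"

lemma centralD: "central z \<Longrightarrow> z * y = y * z"
  by (simp add: central_def)

lemma central_lcomm: "central c \<Longrightarrow> a * (c * b) = c * (a * b)"
  unfolding central_def by (metis mult.assoc)

lemma central_1 [simp]: "central 1"
  and central_0 [simp]: "central 0"
  and central_of_int [simp]: "central (of_int k)"
  by (auto simp: central_def mult_of_int_commute)

lemma central_mult [simp]: "central a \<Longrightarrow> central b \<Longrightarrow> central (a * b)"
  unfolding central_def by (metis mult.assoc)

lemma central_add [simp]: "central a \<Longrightarrow> central b \<Longrightarrow> central (a + b)"
  unfolding central_def by (metis distrib_left distrib_right)

lemma central_power [simp]: "central a \<Longrightarrow> central (a ^ n)"
  by (induction n) auto

lemma central_inverse [simp]: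
  fixes a :: "'a::division_ring"
  assumes "central a"
  shows "central (inverse a)"
proof (cases "a = 0")
  case False
  show ?thesis unfolding central_def
  proof
    fix y
    have "inverse a * y = inverse a * (y * a) * inverse a"
      using False by (simp add: mult.assoc)
    also have "\<dots> = inverse a * (a * y) * inverse a"
      using assms by (simp add: central_def)
    also have "\<dots> = y * inverse a"
      using False by (simp add: mult.assoc[symmetric])
    finally show "inverse a * y = y * inverse a" .
  qed
qed simp

lemma central_powi [simp]: "central (a::'a::division_ring) \<Longrightarrow> central (a powi j)"
  by (simp add: power_int_def)

lemma central_sum [simp]: "(\<And>x. x \<in> S \<Longrightarrow> central (f x)) \<Longrightarrow> central (sum f S)"
  by (induction S rule: infinite_finite_induct) auto

lemma central_mult_power: "central c \<Longrightarrow> (c * y) ^ s = c ^ s * y ^ s"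
proof (induction s)
  case (Suc s)
  have "(c * y) ^ Suc s = (c ^ s * y ^ s) * (c * y)"
    by (simp only: power_Suc2 Suc)
  also have "\<dots> = (c ^ s * c) * (y ^ s * y)"
    using central_lcomm[OF Suc.prems, of "y ^ s" y] by (simp add: mult.assoc)
  finally show ?case by (simp only: power_Suc2)
qed simp

lemma qcommute_power:
  fixes x y c :: "'a::division_ring"
  assumes "central c" and xy: "x * y = c * y * x"
  shows "x * y ^ n = c ^ n * y ^ n * x"
proof (induction n)
  case (Suc n)
  have "x * y ^ Suc n = (x * y ^ n) * y"
    by (simp only: power_Suc2 mult.assoc)
  also have "\<dots> = c ^ n * y ^ n * (c * y * x)"
    by (simp add: Suc mult.assoc xy)
  also have "\<dots> = (c ^ n * c) * (y ^ n * y) * x"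
    using centralD[OF assms(1), of "y ^ n"] by (metis mult.assoc)
  finally show ?case by (simp only: power_Suc2)
qed simp

lemma qcommute_inverse:
  fixes x y c :: "'a::division_ring"
  assumes c: "central c" "c \<noteq> 0" and "y \<noteq> 0" and xy: "x * y = c * y * x"
  shows "x * inverse y = inverse c * inverse y * x"
proof -
  have "inverse y * x * y = inverse y * c * y * x"
    by (simp add: xy mult.assoc)
  also have "\<dots> = c * (inverse y * y) * x"
    using centralD[OF c(1), of "inverse y"] by (metis mult.assoc)
  also have "\<dots> = c * x"
    using \<open>y \<noteq> 0\<close> by simp
  finally have "inverse y * x * y = c * x" .
  then have "inverse y * x = c * x * inverse y"
    using \<open>y \<noteq> 0\<close> by (metis mult.assoc right_inverse mult_1_right)
  then show ?thesis
    using c by (simp add: mult.assoc flip: mult.assoc[of "inverse c" c])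
qed

lemma qcommute_powi_right:
  fixes x y c :: "'a::division_ring"
  assumes "central c" "c \<noteq> 0" "y \<noteq> 0" "x * y = c * y * x"
  shows "x * y powi b = c powi b * y powi b * x"
proof (cases "b \<ge> 0")
  case False
  have "x * inverse y ^ nat (-b) = inverse c ^ nat (-b) * inverse y ^ nat (-b) * x"
    using assms by (intro qcommute_power qcommute_inverse) auto
  with False show ?thesis
    by (simp add: power_int_def)
qed (use assms qcommute_power in \<open>simp add: power_int_def\<close>)

lemma qcommute_powi:
  fixes x y c :: "'a::division_ring"
  assumes c: "central c" "c \<noteq> 0" and "y \<noteq> 0" "x \<noteq> 0" and xy: "x * y = c * y * x"
  shows "x powi a * y powi b = c powi (a * b) * y powi b * x powi a"
proof -
  define Y C where "Y = y powi b" and "C = c powi b"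
  have C: "central C" "C \<noteq> 0" and "Y \<noteq> 0"
    using assms by (auto simp: C_def Y_def)
  have "x * Y = C * Y * x"
    unfolding Y_def C_def using assms by (intro qcommute_powi_right)
  then have "Y * x = inverse C * x * Y"
    using C by (simp add: mult.assoc flip: mult.assoc[of "inverse C"])
  then have "Y * x powi a = inverse C powi a * x powi a * Y"
    using C \<open>x \<noteq> 0\<close> by (intro qcommute_powi_right) auto
  then have "C powi a * (Y * x powi a) = x powi a * Y"
    using C by (simp add: mult.assoc[symmetric] power_int_inverse)
  moreover have "C powi a = c powi (a * b)"
    unfolding C_def by (simp add: power_int_mult[symmetric] mult.commute)
  ultimately show ?thesis
    unfolding Y_def by (simp add: mult.assoc)
qed


section \<open>Quantum monomials\<close>

definition bform :: "nat \<Rightarrow> (nat \<Rightarrow> nat \<Rightarrow> int) \<Rightarrow> (nat \<Rightarrow> int) \<Rightarrow> (nat \<Rightarrow> int) \<Rightarrow> int" where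
  "bform m \<Lambda> \<alpha> \<beta> = (\<Sum>i<m. \<Sum>j<m. \<alpha> i * \<Lambda> i j * \<beta> j)"

lemma bform_Suc:
  "bform (Suc m) \<Lambda> \<alpha> \<beta> = bform m \<Lambda> \<alpha> \<beta> + (\<Sum>i<m. \<alpha> i * \<Lambda> i m * \<beta> m)
     + (\<Sum>j<m. \<alpha> m * \<Lambda> m j * \<beta> j) + \<alpha> m * \<Lambda> m m * \<beta> m"
  by (simp add: bform_def sum.distrib)

lemma bform_add_left: "bform m \<Lambda> (\<lambda>i. \<alpha> i + \<gamma> i) \<beta> = bform m \<Lambda> \<alpha> \<beta> + bform m \<Lambda> \<gamma> \<beta>"
  and bform_add_right: "bform m \<Lambda> \<alpha> (\<lambda>i. \<beta> i + \<gamma> i) = bform m \<Lambda> \<alpha> \<beta> + bform m \<Lambda> \<alpha> \<gamma>"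
  and bform_scale_left: "bform m \<Lambda> (\<lambda>i. c * \<alpha> i) \<beta> = c * bform m \<Lambda> \<alpha> \<beta>"
  and bform_scale_right: "bform m \<Lambda> \<alpha> (\<lambda>i. c * \<beta> i) = c * bform m \<Lambda> \<alpha> \<beta>"
  by (simp_all add: bform_def sum.distrib sum_distrib_left algebra_simps)

lemma bform_unitvec: "i < m \<Longrightarrow> j < m \<Longrightarrow> bform m L (unitvec i) (unitvec j) = L i j"
  by (simp add: bform_def unitvec_def if_distrib[of "\<lambda>x. x * _"] if_distrib[of "\<lambda>x. _ * x"] cong: if_cong)

lemma Xmon_0 [simp]: "Xmon v 0 \<Lambda> X \<alpha> = 1"
  by (simp add: Xmon_def)

locale quantum_torus =
  fixes v :: "'a::division_ring" and m :: nat and \<Lambda> :: "nat \<Rightarrow> nat \<Rightarrow> int" and X :: "nat \<Rightarrow> 'a"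
  assumes qtorus_frac: "qtorus_frac v m \<Lambda> X"
    and skew: "\<And>i j. i < m \<Longrightarrow> j < m \<Longrightarrow> \<Lambda> i j = - \<Lambda> j i"
begin

abbreviation mon :: "(nat \<Rightarrow> int) \<Rightarrow> 'a" where
  "mon \<equiv> Xmon v m \<Lambda> X"

lemma v_nonzero: "v \<noteq> 0"
  and central_v: "central v"
  and X_nonzero: "i < m \<Longrightarrow> X i \<noteq> 0"
  and X_commute: "i < m \<Longrightarrow> j < m \<Longrightarrow> X i * X j = v powi (2 * \<Lambda> i j) * X j * X i"
  using qtorus_frac by (auto simp: qtorus_frac_def central_def)

lemma central_v_powi [simp]: "central (v powi a)"
  using central_v by simp

lemma v_powi_add: "v powi a * v powi b = v powi (a + b)"
  using v_nonzero by (simp add: power_int_add)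

lemma Xmon_Suc:
  "Xmon v (Suc m') \<Lambda> X \<alpha> = v powi (\<Sum>i<m'. \<alpha> i * \<alpha> m' * \<Lambda> m' i) * Xmon v m' \<Lambda> X \<alpha> * X m' powi \<alpha> m'"
  by (simp add: Xmon_def v_powi_add[symmetric] add.commute mult.assoc)

lemma v_powi_lcommute: "x * (v powi a * y) = v powi a * (x * y)"
  by (rule central_lcomm) simp

lemma v_powi_add_assoc: "v powi a * (v powi b * x) = v powi (a + b) * x"
  by (simp add: v_powi_add flip: mult.assoc)

lemma X_powi_commute_Xmon:
  assumes "m' \<le> j" "j < m"
  shows "X j powi a * Xmon v m' \<Lambda> X \<beta>
           = v powi (2 * a * (\<Sum>i<m'. \<Lambda> j i * \<beta> i)) * Xmon v m' \<Lambda> X \<beta> * X j powi a"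
  using assms(1)
proof (induction m')
  case (Suc m')
  let ?c = "v powi (\<Sum>i<m'. \<beta> i * \<beta> m' * \<Lambda> m' i)"
  let ?d = "v powi (2 * a * (\<Sum>i<m'. \<Lambda> j i * \<beta> i))"
  let ?e = "v powi (2 * a * (\<Lambda> j m' * \<beta> m'))"
  have "X j powi a * X m' powi \<beta> m' = (v powi (2 * \<Lambda> j m')) powi (a * \<beta> m') * X m' powi \<beta> m' * X j powi a"
    using Suc.prems assms X_commute[of j m'] by (intro qcommute_powi) (auto simp: X_nonzero v_nonzero)
  then have swap: "X j powi a * X m' powi \<beta> m' = ?e * X m' powi \<beta> m' * X j powi a"
    by (simp add: power_int_mult[symmetric] algebra_simps)
  have exponent: "?c * ?d * ?e = v powi (2 * a * (\<Sum>i<Suc m'. \<Lambda> j i * \<beta> i)) * ?c"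
    by (simp add: v_powi_add distrib_left add_ac)
  have "X j powi a * Xmon v (Suc m') \<Lambda> X \<beta> = ?c * ((X j powi a * Xmon v m' \<Lambda> X \<beta>) * X m' powi \<beta> m')"
    by (simp add: Xmon_Suc v_powi_lcommute[of "X j powi a"] mult.assoc)
  also have "\<dots> = ?c * (?d * (Xmon v m' \<Lambda> X \<beta> * (X j powi a * X m' powi \<beta> m')))"
    using Suc by (simp add: mult.assoc)
  also have "\<dots> = (?c * ?d * ?e) * (Xmon v m' \<Lambda> X \<beta> * X m' powi \<beta> m' * X j powi a)"
    by (simp add: swap v_powi_lcommute[of "Xmon v m' \<Lambda> X \<beta>"] mult.assoc)
  also have "\<dots> = v powi (2 * a * (\<Sum>i<Suc m'. \<Lambda> j i * \<beta> i)) * Xmon v (Suc m') \<Lambda> X \<beta> * X j powi a"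
    unfolding exponent by (simp add: Xmon_Suc mult.assoc)
  finally show ?case .
qed (simp add: Xmon_def)

lemma Xmon_mult_prefix:
  assumes "m' \<le> m"
  shows "Xmon v m' \<Lambda> X \<alpha> * Xmon v m' \<Lambda> X \<beta> = v powi (bform m' \<Lambda> \<alpha> \<beta>) * Xmon v m' \<Lambda> X (\<lambda>i. \<alpha> i + \<beta> i)"
  using assms
proof (induction m')
  case (Suc m')
  have "m' < m" using Suc.prems by simp
  let ?a = "\<alpha> m'" and ?b = "\<beta> m'"
  let ?S = "\<lambda>\<gamma>. \<Sum>i<m'. \<gamma> i * \<gamma> m' * \<Lambda> m' i"
  let ?T = "2 * ?a * (\<Sum>i<m'. \<Lambda> m' i * \<beta> i)"
  have exponent: "?S \<alpha> + ?S \<beta> + ?T + bform m' \<Lambda> \<alpha> \<beta> = bform (Suc m') \<Lambda> \<alpha> \<beta> + ?S (\<lambda>i. \<alpha> i + \<beta> i)"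
  proof -
    have "\<Lambda> m' m' = 0"
      using skew[of m' m'] \<open>m' < m\<close> by simp
    moreover have "(\<Sum>i<m'. \<alpha> i * \<Lambda> i m' * ?b) = - (\<Sum>i<m'. \<alpha> i * \<Lambda> m' i * ?b)"
      unfolding sum_negf[symmetric]
    proof (intro sum.cong refl)
      fix i assume "i \<in> {..<m'}"
      then have "\<Lambda> i m' = - \<Lambda> m' i"
        using \<open>m' < m\<close> by (intro skew) auto
      then show "\<alpha> i * \<Lambda> i m' * ?b = - (\<alpha> i * \<Lambda> m' i * ?b)"
        by simp
    qed
    ultimately show ?thesis
      by (simp add: bform_Suc sum_distrib_left sum.distrib[symmetric] sum_negf[symmetric] algebra_simps)
  qed
  have "Xmon v (Suc m') \<Lambda> X \<alpha> * Xmon v (Suc m') \<Lambda> X \<beta>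
      = v powi ?S \<alpha> * (v powi ?S \<beta> * (Xmon v m' \<Lambda> X \<alpha> * ((X m' powi ?a * Xmon v m' \<Lambda> X \<beta>) * X m' powi ?b)))"
    by (simp add: Xmon_Suc mult.assoc v_powi_lcommute[of "Xmon v m' \<Lambda> X \<alpha>"] v_powi_lcommute[of "X m' powi ?a"])
  also have "\<dots> = v powi ?S \<alpha> * (v powi ?S \<beta> * (v powi ?T
                  * ((Xmon v m' \<Lambda> X \<alpha> * Xmon v m' \<Lambda> X \<beta>) * (X m' powi ?a * X m' powi ?b))))"
    using \<open>m' < m\<close> by (simp add: X_powi_commute_Xmon mult.assoc v_powi_lcommute[of "Xmon v m' \<Lambda> X \<alpha>"])
  also have "\<dots> = v powi (?S \<alpha> + ?S \<beta> + ?T + bform m' \<Lambda> \<alpha> \<beta>)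
                  * (Xmon v m' \<Lambda> X (\<lambda>i. \<alpha> i + \<beta> i) * X m' powi (?a + ?b))"
    using Suc \<open>m' < m\<close> by (simp add: X_nonzero power_int_add v_powi_add_assoc mult.assoc add.assoc)
  also have "\<dots> = v powi (bform (Suc m') \<Lambda> \<alpha> \<beta>) * Xmon v (Suc m') \<Lambda> X (\<lambda>i. \<alpha> i + \<beta> i)"
    unfolding exponent by (simp add: Xmon_Suc v_powi_add_assoc mult.assoc)
  finally show ?case .
qed (simp add: Xmon_def bform_def)

lemma Xmon_mult: "mon \<alpha> * mon \<beta> = v powi (bform m \<Lambda> \<alpha> \<beta>) * mon (\<lambda>i. \<alpha> i + \<beta> i)"
  by (rule Xmon_mult_prefix) simp

lemma Xmon_prefix_unitvec: "Xmon v m' \<Lambda> X (unitvec i) = (if i < m' then X i else 1)"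
  by (induction m') (auto simp: Xmon_Suc unitvec_def less_Suc_eq)

lemma Xmon_prefix_zero: "Xmon v m' \<Lambda> X (\<lambda>_. 0) = 1"
  by (induction m') (simp_all add: Xmon_Suc)

lemma Xmon_unitvec: "i < m \<Longrightarrow> mon (unitvec i) = X i"
  by (simp add: Xmon_prefix_unitvec)

lemma Xmon_zero: "mon (\<lambda>_. 0) = 1"
  by (rule Xmon_prefix_zero)

lemma bform_swap: "bform m \<Lambda> \<beta> \<alpha> = - bform m \<Lambda> \<alpha> \<beta>"
proof -
  have "bform m \<Lambda> \<beta> \<alpha> = (\<Sum>j<m. \<Sum>i<m. \<beta> i * \<Lambda> i j * \<alpha> j)"
    unfolding bform_def by (rule sum.swap)
  also have "\<dots> = (\<Sum>j<m. \<Sum>i<m. - (\<alpha> j * \<Lambda> j i * \<beta> i))"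
  proof (intro sum.cong refl)
    fix i j assume "i \<in> {..<m}" "j \<in> {..<m}"
    then show "\<beta> i * \<Lambda> i j * \<alpha> j = - (\<alpha> j * \<Lambda> j i * \<beta> i)"
      using skew[of i j] by simp
  qed
  finally show ?thesis by (simp add: bform_def sum_negf)
qed

lemma bform_self: "bform m \<Lambda> \<alpha> \<alpha> = 0"
  using bform_swap[of \<alpha> \<alpha>] by simp

lemma Xmon_power: "mon \<alpha> ^ s = mon (\<lambda>i. int s * \<alpha> i)"
proof (induction s)
  case (Suc s)
  have "mon \<alpha> ^ Suc s = mon (\<lambda>i. int s * \<alpha> i) * mon \<alpha>"
    by (simp only: power_Suc2 Suc)
  also have "\<dots> = mon (\<lambda>i. int (Suc s) * \<alpha> i)"
    by (simp add: Xmon_mult bform_scale_left bform_self algebra_simps)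
  finally show ?case .
qed (simp add: Xmon_zero)

lemma Xmon_mult_poly:
  assumes "\<And>s. central (L s)"
  shows "mon \<beta> * (\<Sum>s\<le>R. L s * (v powi e * mon \<gamma>) ^ s)
       = (\<Sum>s\<le>R. L s * (v powi (int s * (e + bform m \<Lambda> \<beta> \<gamma>)) * mon (\<lambda>i. \<beta> i + int s * \<gamma> i)))"
  unfolding sum_distrib_left
proof (rule sum.cong[OF refl])
  fix s
  have "mon \<beta> * (L s * (v powi e * mon \<gamma>) ^ s) = L s * (v powi (int s * e) * (mon \<beta> * mon (\<lambda>i. int s * \<gamma> i)))"
    by (simp add: central_lcomm[OF assms] central_mult_power Xmon_power power_int_power' mult.commute
        v_powi_lcommute[of "mon \<beta>"])
  also have "\<dots> = L s * (v powi (int s * (e + bform m \<Lambda> \<beta> \<gamma>)) * mon (\<lambda>i. \<beta> i + int s * \<gamma> i))"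
    by (simp add: Xmon_mult bform_scale_right v_powi_add_assoc distrib_left)
  finally show "mon \<beta> * (L s * (v powi e * mon \<gamma>) ^ s)
      = L s * (v powi (int s * (e + bform m \<Lambda> \<beta> \<gamma>)) * mon (\<lambda>i. \<beta> i + int s * \<gamma> i))" .
qed

end


section \<open>Homomorphisms of division rings\<close>

locale division_ring_hom =
  fixes f :: "'b::division_ring \<Rightarrow> 'a::division_ring"
  assumes hom_add: "f (x + y) = f x + f y"
    and hom_mult: "f (x * y) = f x * f y"
    and hom_one: "f 1 = 1"
begin

lemma hom_zero: "f 0 = 0"
  using hom_add[of 0 0] by simp

lemma hom_uminus: "f (- x) = - f x"
  using hom_add[of x "- x"] by (metis add.commute eq_neg_iff_add_eq_0 hom_zero right_minus)

lemma hom_diff: "f (x - y) = f x - f y"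
  using hom_add[of x "- y"] by (simp add: hom_uminus)

lemma hom_nonzero: "x \<noteq> 0 \<Longrightarrow> f x \<noteq> 0"
  using hom_mult[of x "inverse x"] by (auto simp: hom_one)

lemma hom_inverse: "f (inverse x) = inverse (f x)"
proof (cases "x = 0")
  case False
  then have "f x * f (inverse x) = 1"
    by (simp add: hom_one flip: hom_mult)
  then show ?thesis
    using hom_nonzero[OF False] by (metis inverse_unique)
qed (simp add: hom_zero)

lemma inj: "inj f"
proof (rule injI)
  fix x y assume "f x = f y"
  then show "x = y"
    using hom_nonzero[of "x - y"] by (auto simp: hom_diff)
qed

lemma hom_of_int: "f (of_int k) = of_int k"
proof -
  have "f (of_nat n) = of_nat n" for n
    by (induction n) (simp_all add: hom_zero hom_add hom_one)
  then show ?thesis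
    by (cases k rule: int_cases4) (simp_all add: hom_uminus)
qed

lemma hom_powi: "f (x powi j) = f x powi j"
proof -
  have "f (x ^ n) = f x ^ n" for x n
    by (induction n) (simp_all add: hom_one hom_mult)
  then show ?thesis
    by (simp add: power_int_def hom_inverse)
qed

lemma hom_sum: "f (sum g S) = (\<Sum>x\<in>S. f (g x))"
  by (induction S rule: infinite_finite_induct) (simp_all add: hom_zero hom_add)

lemma hom_lev: "f v = w \<Longrightarrow> f (lev v c) = lev w c"
  by (simp add: lev_def hom_sum hom_mult hom_of_int hom_powi)

end

lemma division_ring_hom_comp:
  "division_ring_hom f \<Longrightarrow> division_ring_hom g \<Longrightarrow> division_ring_hom (f \<circ> g)"
  by (simp add: division_ring_hom_def)

lemma alg_iso_division_ring_hom: "alg_iso w v f \<Longrightarrow> division_ring_hom f"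
  by (simp add: alg_iso_def alg_hom_def division_ring_hom_def)

lemma alg_iso_param: "alg_iso w v f \<Longrightarrow> f w = v"
  by (simp add: alg_iso_def alg_hom_def)

lemma qtorus_frac_generated:
  assumes "qtorus_frac v m \<Lambda> X" and "0 \<in> A" "1 \<in> A"
    and "\<And>x y. x \<in> A \<Longrightarrow> y \<in> A \<Longrightarrow> x + y \<in> A" "\<And>x y. x \<in> A \<Longrightarrow> y \<in> A \<Longrightarrow> x * y \<in> A"
    and "\<And>x. x \<in> A \<Longrightarrow> - x \<in> A" "\<And>x. x \<in> A \<Longrightarrow> inverse x \<in> A"
    and "v \<in> A" "\<And>i. i < m \<Longrightarrow> X i \<in> A"
  shows "A = UNIV"
proof -
  have "\<forall>A. 0 \<in> A \<longrightarrow> 1 \<in> A \<longrightarrow> (\<forall>x\<in>A. \<forall>y\<in>A. x + y \<in> A \<and> x * y \<in> A) \<longrightarrow>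
          (\<forall>x\<in>A. - x \<in> A \<and> inverse x \<in> A) \<longrightarrow> v \<in> A \<longrightarrow> (\<forall>i<m. X i \<in> A) \<longrightarrow> A = UNIV"
    using assms(1) unfolding qtorus_frac_def by (elim conjE)
  then show ?thesis
    by (rule allE[of _ A], elim impE) (use assms(2-) in auto)
qed

lemma qtorus_frac_hom_eqI:
  assumes "qtorus_frac v m \<Lambda> X" "division_ring_hom g1" "division_ring_hom g2"
    and "g1 v = g2 v" "\<And>i. i < m \<Longrightarrow> g1 (X i) = g2 (X i)"
  shows "g1 = g2"
proof -
  interpret g1: division_ring_hom g1 by fact
  interpret g2: division_ring_hom g2 by fact
  have "{x. g1 x = g2 x} = UNIV"
    by (rule qtorus_frac_generated[OF assms(1)])
      (simp_all add: assms g1.hom_zero g2.hom_zero g1.hom_one g2.hom_one g1.hom_add g2.hom_add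
        g1.hom_mult g2.hom_mult g1.hom_uminus g2.hom_uminus g1.hom_inverse g2.hom_inverse)
  then show ?thesis by auto
qed

lemma qtorus_frac_hom_surjI:
  assumes "qtorus_frac v m \<Lambda> X" "division_ring_hom g"
    and "v \<in> range g" "\<And>i. i < m \<Longrightarrow> X i \<in> range g"
  shows "surj g"
proof -
  interpret division_ring_hom g by fact
  show ?thesis
  proof (rule qtorus_frac_generated[OF assms(1)])
    show "0 \<in> range g" "1 \<in> range g"
      by (metis rangeI hom_zero, metis rangeI hom_one)
    show "x + y \<in> range g" "x * y \<in> range g" if "x \<in> range g" "y \<in> range g" for x y
      using that by (auto simp flip: hom_add hom_mult)
    show "- x \<in> range g" "inverse x \<in> range g" if "x \<in> range g" for x
      using that by (auto simp flip: hom_uminus hom_inverse)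
  qed (use assms in auto)
qed


section \<open>Extending homomorphisms from a right Ore subring\<close>

lemma inverse_mult_cancel_left: "(x::'a::division_ring) \<noteq> 0 \<Longrightarrow> x * (inverse x * y) = y"
  and mult_inverse_cancel_left: "(x::'a::division_ring) \<noteq> 0 \<Longrightarrow> inverse x * (x * y) = y"
  by (simp_all flip: mult.assoc)

lemma frac_add_common_denominator:
  fixes a s a' s' c u :: "'a::division_ring"
  assumes "s' * u = s * c" "s \<noteq> 0" "c \<noteq> 0" "u \<noteq> 0" "s' \<noteq> 0"
  shows "a * inverse s + a' * inverse s' = (a * c + a' * u) * inverse (s * c)"
proof -
  have "inverse s = c * inverse (s * c)"
    using assms by (simp add: nonzero_inverse_mult_distrib flip: mult.assoc)
  moreover have "inverse s' = u * inverse (s * c)"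
    using assms by (simp add: nonzero_inverse_mult_distrib flip: mult.assoc assms(1))
  ultimately show ?thesis
    by (simp add: distrib_right mult.assoc)
qed

lemma frac_mult_ore:
  fixes a s a' s' c u :: "'a::division_ring"
  assumes "a' * u = s * c" "s \<noteq> 0" "u \<noteq> 0" "s' \<noteq> 0"
  shows "(a * inverse s) * (a' * inverse s') = (a * c) * inverse (s' * u)"
proof -
  have "inverse s * a' * u = c"
    using assms(1,2) by (simp add: mult.assoc mult_inverse_cancel_left)
  then have "inverse s * a' = c * inverse u"
    using assms(3) by (metis mult.assoc right_inverse mult_1_right)
  then have "(a * inverse s) * (a' * inverse s') = a * (c * inverse u) * inverse s'"
    by (metis mult.assoc)
  also have "\<dots> = (a * c) * inverse (s' * u)"
    using assms by (simp add: nonzero_inverse_mult_distrib mult.assoc)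
  finally show ?thesis .
qed

locale right_ore_hom =
  fixes T :: "'b::division_ring set" and f :: "'b \<Rightarrow> 'a::division_ring"
  assumes one_mem: "1 \<in> T"
    and add_mem: "x \<in> T \<Longrightarrow> y \<in> T \<Longrightarrow> x + y \<in> T"
    and mult_mem: "x \<in> T \<Longrightarrow> y \<in> T \<Longrightarrow> x * y \<in> T"
    and uminus_mem: "x \<in> T \<Longrightarrow> - x \<in> T"
    and right_ore: "a \<in> T \<Longrightarrow> s \<in> T \<Longrightarrow> s \<noteq> 0 \<Longrightarrow> \<exists>u c. u \<in> T \<and> c \<in> T \<and> u \<noteq> 0 \<and> a * u = s * c"
    and f_add: "x \<in> T \<Longrightarrow> y \<in> T \<Longrightarrow> f (x + y) = f x + f y"
    and f_mult: "x \<in> T \<Longrightarrow> y \<in> T \<Longrightarrow> f (x * y) = f x * f y"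
    and f_one: "f 1 = 1"
    and f_nonzero: "x \<in> T \<Longrightarrow> x \<noteq> 0 \<Longrightarrow> f x \<noteq> 0"
begin

definition fractions :: "'b set" where
  "fractions = {a * inverse s | a s. a \<in> T \<and> s \<in> T \<and> s \<noteq> 0}"

lemma zero_mem: "0 \<in> T"
  using add_mem[OF one_mem uminus_mem[OF one_mem]] by simp

lemma common_multiple:
  assumes "s \<in> T" "s' \<in> T" "s \<noteq> 0" "s' \<noteq> 0"
  obtains u c where "u \<in> T" "c \<in> T" "u \<noteq> 0" "c \<noteq> 0" "s' * u = s * c"
proof -
  obtain u c where "u \<in> T" "c \<in> T" "u \<noteq> 0" "s' * u = s * c"
    using right_ore[OF assms(2,1,3)] by blast
  moreover have "c \<noteq> 0"
    using calculation assms by auto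
  ultimately show ?thesis using that by blast
qed

lemma fractionsI: "a \<in> T \<Longrightarrow> s \<in> T \<Longrightarrow> s \<noteq> 0 \<Longrightarrow> a * inverse s \<in> fractions"
  unfolding fractions_def by blast

lemma mem_fractions: "x \<in> T \<Longrightarrow> x \<in> fractions"
  using fractionsI[of x 1] one_mem by simp

lemma fractions_closed:
  assumes "x \<in> fractions" "y \<in> fractions"
  shows "x + y \<in> fractions" "x * y \<in> fractions" "- x \<in> fractions" "inverse x \<in> fractions"
proof -
  obtain a s a' s' where x: "x = a * inverse s" "a \<in> T" "s \<in> T" "s \<noteq> 0"
    and y: "y = a' * inverse s'" "a' \<in> T" "s' \<in> T" "s' \<noteq> 0"
    using assms unfolding fractions_def by blast
  obtain u c where uc: "u \<in> T" "c \<in> T" "u \<noteq> 0" "c \<noteq> 0" "s' * u = s * c"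
    using common_multiple[OF x(3) y(3) x(4) y(4)] by blast
  have "x + y = (a * c + a' * u) * inverse (s * c)"
    unfolding x(1) y(1) using uc x y by (intro frac_add_common_denominator) auto
  then show "x + y \<in> fractions"
    using uc x y by (simp add: fractionsI add_mem mult_mem)
  obtain u' c' where uc': "u' \<in> T" "c' \<in> T" "u' \<noteq> 0" "a' * u' = s * c'"
    using right_ore[OF y(2) x(3) x(4)] by blast
  have "x * y = (a * c') * inverse (s' * u')"
    unfolding x(1) y(1) using uc' x y by (intro frac_mult_ore) auto
  then show "x * y \<in> fractions"
    using uc' x y by (simp add: fractionsI mult_mem)
  have "- x = (- a) * inverse s"
    using x by simp
  then show "- x \<in> fractions"
    by (metis fractionsI uminus_mem x(2-4))
  show "inverse x \<in> fractions"
  proof (cases "a = 0")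
    case True
    then show ?thesis using x zero_mem mem_fractions by simp
  next
    case False
    then have "inverse x = s * inverse a"
      using x by (simp add: nonzero_inverse_mult_distrib)
    then show ?thesis
      using x False by (simp add: fractionsI)
  qed
qed

lemma ext_well_defined:
  assumes "a \<in> T" "s \<in> T" "s \<noteq> 0" "a' \<in> T" "s' \<in> T" "s' \<noteq> 0" "a * inverse s = a' * inverse s'"
  shows "f a * inverse (f s) = f a' * inverse (f s')"
proof -
  obtain u c where uc: "u \<in> T" "c \<in> T" "u \<noteq> 0" "c \<noteq> 0" "s' * u = s * c"
    using common_multiple[OF assms(2,5,3,6)] by blast
  have "a * c = a * inverse s * (s * c)"
    using assms(3) by (simp add: mult.assoc mult_inverse_cancel_left)
  also have "\<dots> = a' * inverse s' * (s' * u)"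
    using assms(7) uc(5) by simp
  also have "\<dots> = a' * u"
    using assms(6) by (simp add: mult.assoc mult_inverse_cancel_left)
  finally have ac: "f a * f c = f a' * f u"
    using assms uc by (metis f_mult)
  have fsc: "f s' * f u = f s * f c"
    using assms uc by (metis f_mult)
  have nz: "f s \<noteq> 0" "f c \<noteq> 0" "f s' \<noteq> 0" "f u \<noteq> 0"
    using f_nonzero assms uc by auto
  have "f a * inverse (f s) = (f a * f c) * inverse (f s * f c)"
    using nz by (simp add: nonzero_inverse_mult_distrib mult.assoc inverse_mult_cancel_left)
  also have "\<dots> = (f a' * f u) * inverse (f s' * f u)"
    by (simp only: ac fsc)
  also have "\<dots> = f a' * inverse (f s')"
    using nz by (simp add: nonzero_inverse_mult_distrib mult.assoc inverse_mult_cancel_left)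
  finally show ?thesis .
qed

definition ext :: "'b \<Rightarrow> 'a" where
  "ext x = (SOME y. \<exists>a s. a \<in> T \<and> s \<in> T \<and> s \<noteq> 0 \<and> x = a * inverse s \<and> y = f a * inverse (f s))"

lemma ext_fraction:
  assumes "a \<in> T" "s \<in> T" "s \<noteq> 0"
  shows "ext (a * inverse s) = f a * inverse (f s)"
proof -
  let ?P = "\<lambda>y. \<exists>a' s'. a' \<in> T \<and> s' \<in> T \<and> s' \<noteq> 0 \<and> a * inverse s = a' * inverse s' \<and> y = f a' * inverse (f s')"
  have "?P (ext (a * inverse s))"
    unfolding ext_def by (rule someI[of ?P]) (use assms in blast)
  then show ?thesis
    using ext_well_defined[OF assms] by auto
qed

lemma ext_on_T: "x \<in> T \<Longrightarrow> ext x = f x"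
  using ext_fraction[of x 1] one_mem f_one by simp

lemma ext_add:
  assumes "x \<in> fractions" "y \<in> fractions"
  shows "ext (x + y) = ext x + ext y"
proof -
  obtain a s a' s' where x: "x = a * inverse s" "a \<in> T" "s \<in> T" "s \<noteq> 0"
    and y: "y = a' * inverse s'" "a' \<in> T" "s' \<in> T" "s' \<noteq> 0"
    using assms unfolding fractions_def by blast
  obtain u c where uc: "u \<in> T" "c \<in> T" "u \<noteq> 0" "c \<noteq> 0" "s' * u = s * c"
    using common_multiple[OF x(3) y(3) x(4) y(4)] by blast
  have "ext (x + y) = ext ((a * c + a' * u) * inverse (s * c))"
    unfolding x(1) y(1) using uc x y by (subst frac_add_common_denominator) auto
  also have "\<dots> = (f a * f c + f a' * f u) * inverse (f s * f c)"
    using uc x y by (simp add: ext_fraction add_mem mult_mem f_add f_mult)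
  also have "\<dots> = f a * inverse (f s) + f a' * inverse (f s')"
  proof (rule frac_add_common_denominator[symmetric])
    show "f s' * f u = f s * f c"
      using uc x y by (metis f_mult)
  qed (use uc x y f_nonzero in auto)
  also have "\<dots> = ext x + ext y"
    using x y by (simp add: ext_fraction)
  finally show ?thesis .
qed

lemma ext_mult:
  assumes "x \<in> fractions" "y \<in> fractions"
  shows "ext (x * y) = ext x * ext y"
proof -
  obtain a s a' s' where x: "x = a * inverse s" "a \<in> T" "s \<in> T" "s \<noteq> 0"
    and y: "y = a' * inverse s'" "a' \<in> T" "s' \<in> T" "s' \<noteq> 0"
    using assms unfolding fractions_def by blast
  obtain u c where uc: "u \<in> T" "c \<in> T" "u \<noteq> 0" "a' * u = s * c"
    using right_ore[OF y(2) x(3) x(4)] by blast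
  have "ext (x * y) = ext ((a * c) * inverse (s' * u))"
    unfolding x(1) y(1) using uc x y by (subst frac_mult_ore) auto
  also have "\<dots> = (f a * f c) * inverse (f s' * f u)"
    using uc x y by (simp add: ext_fraction mult_mem f_mult)
  also have "\<dots> = (f a * inverse (f s)) * (f a' * inverse (f s'))"
  proof (rule frac_mult_ore[symmetric])
    show "f a' * f u = f s * f c"
      using uc x y by (metis f_mult)
  qed (use uc x y f_nonzero in auto)
  also have "\<dots> = ext x * ext y"
    using x y by (simp add: ext_fraction)
  finally show ?thesis .
qed

lemma ext_hom: "fractions = UNIV \<Longrightarrow> division_ring_hom ext"
  by unfold_locales (simp_all add: ext_add ext_mult ext_on_T one_mem f_one)

end


section \<open>Finite integer linear combinations\<close>

definition supp :: "('k \<Rightarrow> int) \<Rightarrow> 'k set" where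
  "supp c = {p. c p \<noteq> 0}"

definition lincomb :: "('k \<Rightarrow> 'a::ring_1) \<Rightarrow> ('k \<Rightarrow> int) \<Rightarrow> 'a" where
  "lincomb b c = (\<Sum>p\<in>supp c. of_int (c p) * b p)"

definition push_coeffs :: "'i set \<Rightarrow> ('i \<Rightarrow> 'k) \<Rightarrow> ('i \<Rightarrow> int) \<Rightarrow> 'k \<Rightarrow> int" where
  "push_coeffs I key w = (\<lambda>p. \<Sum>i\<in>I. if key i = p then w i else 0)"

definition convolution :: "('k \<Rightarrow> 'k \<Rightarrow> 'k) \<Rightarrow> ('k \<Rightarrow> int) \<Rightarrow> ('k \<Rightarrow> int) \<Rightarrow> 'k \<Rightarrow> int" where
  "convolution op c d =
     push_coeffs (supp c \<times> supp d) (\<lambda>q. op (fst q) (snd q)) (\<lambda>q. c (fst q) * d (snd q))"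

lemma supp_add: "supp (\<lambda>p. c p + d p) \<subseteq> supp c \<union> supp d"
  and supp_uminus [simp]: "supp (\<lambda>p. - c p) = supp c"
  and supp_zero [simp]: "supp (\<lambda>_. 0) = {}"
  by (auto simp: supp_def)

lemma supp_delta [simp]: "supp (\<lambda>p. if p = q then z else 0) = (if z = 0 then {} else {q})"
  by (auto simp: supp_def)

lemma lincomb_superset:
  assumes "finite S" "supp c \<subseteq> S"
  shows "lincomb b c = (\<Sum>p\<in>S. of_int (c p) * b p)"
  unfolding lincomb_def by (rule sum.mono_neutral_left) (use assms in \<open>auto simp: supp_def\<close>)

lemma lincomb_add:
  assumes "finite (supp c)" "finite (supp d)"
  shows "lincomb b (\<lambda>p. c p + d p) = lincomb b c + lincomb b d"
proof -
  let ?S = "supp c \<union> supp d"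
  have "lincomb b (\<lambda>p. c p + d p) = (\<Sum>p\<in>?S. of_int (c p + d p) * b p)"
    using assms supp_add[of c d] by (intro lincomb_superset) auto
  also have "\<dots> = (\<Sum>p\<in>?S. of_int (c p) * b p) + (\<Sum>p\<in>?S. of_int (d p) * b p)"
    by (simp add: distrib_right sum.distrib)
  also have "\<dots> = lincomb b c + lincomb b d"
    using assms by (simp add: lincomb_superset[of "supp c \<union> supp d"])
  finally show ?thesis .
qed

lemma lincomb_uminus: "lincomb b (\<lambda>p. - c p) = - lincomb b c"
  by (simp add: lincomb_def sum_negf)

lemma lincomb_delta: "lincomb b (\<lambda>p. if p = q then z else 0) = of_int z * b q"
  by (simp add: lincomb_def)

lemma supp_push_coeffs: "supp (push_coeffs I key w) \<subseteq> key ` I"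
  by (auto simp: supp_def push_coeffs_def elim!: sum.not_neutral_contains_not_neutral split: if_splits)

lemma push_coeffs_at_key:
  assumes "inj_on key I" "i \<in> I" "finite I"
  shows "push_coeffs I key w (key i) = w i"
proof -
  have "push_coeffs I key w (key i) = (\<Sum>j\<in>I. if j = i then w j else 0)"
    unfolding push_coeffs_def using assms(1,2) by (intro sum.cong) (auto dest: inj_onD)
  with assms(2,3) show ?thesis by simp
qed

lemma lincomb_push_coeffs:
  assumes "finite I"
  shows "lincomb b (push_coeffs I key w) = (\<Sum>i\<in>I. of_int (w i) * b (key i))"
proof -
  have "lincomb b (push_coeffs I key w) = (\<Sum>p\<in>key ` I. of_int (push_coeffs I key w p) * b p)"
    using assms supp_push_coeffs[of I key w] by (intro lincomb_superset) auto
  also have "\<dots> = (\<Sum>p\<in>key ` I. \<Sum>i\<in>I. if key i = p then of_int (w i) * b p else 0)"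
    unfolding push_coeffs_def of_int_sum sum_distrib_right by (intro sum.cong refl) auto
  also have "\<dots> = (\<Sum>i\<in>I. of_int (w i) * b (key i))"
    using assms by (subst sum.swap) (simp add: sum.delta)
  finally show ?thesis .
qed

lemma lincomb_mult:
  assumes "finite (supp c)" "finite (supp d)" "\<And>x y. b x * b y = b (op x y)"
  shows "lincomb b c * lincomb b d = lincomb b (convolution op c d)"
proof -
  have "of_int (c x) * b x * (of_int (d y) * b y) = of_int (c x * d y) * b (op x y)" for x y
  proof -
    have "of_int (c x) * b x * (of_int (d y) * b y) = of_int (c x) * (b x * of_int (d y)) * b y"
      by (simp add: mult.assoc)
    also have "\<dots> = of_int (c x * d y) * (b x * b y)"
      by (metis mult.assoc mult_of_int_commute of_int_mult)
    finally show ?thesis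
      by (simp add: assms(3))
  qed
  then have "lincomb b c * lincomb b d = (\<Sum>(x, y)\<in>supp c \<times> supp d. of_int (c x * d y) * b (op x y))"
    by (simp add: lincomb_def sum_product sum.cartesian_product)
  also have "\<dots> = lincomb b (convolution op c d)"
    unfolding convolution_def using assms by (simp add: lincomb_push_coeffs case_prod_unfold)
  finally show ?thesis .
qed

lemma supp_convolution: "p \<in> supp (convolution op c d) \<Longrightarrow> \<exists>x\<in>supp c. \<exists>y\<in>supp d. p = op x y"
  unfolding convolution_def using supp_push_coeffs by fastforce

lemma finite_supp_push_coeffs: "finite I \<Longrightarrow> finite (supp (push_coeffs I key w))"
  using supp_push_coeffs by (rule finite_subset) simp

lemma finite_supp_convolution:
  "finite (supp c) \<Longrightarrow> finite (supp d) \<Longrightarrow> finite (supp (convolution op c d))"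
  unfolding convolution_def by (simp add: finite_supp_push_coeffs)

lemma finite_supp_slice:
  assumes "finite (supp c)"
  shows "finite (supp (\<lambda>j. c (j, \<beta>)))"
proof -
  have "supp (\<lambda>j. c (j, \<beta>)) \<subseteq> fst ` supp c"
    by (force simp: supp_def)
  then show ?thesis
    using assms by (meson finite_imageI finite_subset)
qed


section \<open>The quantum torus as a subring\<close>

context quantum_torus
begin

text \<open>The quantum torus is spanned over \<open>\<int>\<close> by the monomials \<open>v\<^sup>j X(\<alpha>)\<close>, indexed here by
  pairs \<open>(j, \<alpha>)\<close>.\<close>

definition tmon :: "int \<times> (nat \<Rightarrow> int) \<Rightarrow> 'a" where
  "tmon p = v powi fst p * mon (snd p)"

definition tmon_index_mult :: "int \<times> (nat \<Rightarrow> int) \<Rightarrow> int \<times> (nat \<Rightarrow> int) \<Rightarrow> int \<times> (nat \<Rightarrow> int)" where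
  "tmon_index_mult p q = (fst p + fst q + bform m \<Lambda> (snd p) (snd q), \<lambda>i. snd p i + snd q i)"

definition torus_coeffs :: "(int \<times> (nat \<Rightarrow> int) \<Rightarrow> int) \<Rightarrow> bool" where
  "torus_coeffs c \<longleftrightarrow> finite (supp c) \<and> snd ` supp c \<subseteq> Zm m"

definition torus :: "'a set" where
  "torus = lincomb tmon ` Collect torus_coeffs"

lemma tmon_mult: "tmon p * tmon q = tmon (tmon_index_mult p q)"
  by (simp add: tmon_def tmon_index_mult_def Xmon_mult mult.assoc v_powi_lcommute[of "mon (snd p)"]
      v_powi_add_assoc add.assoc)

lemma tmon_scalar: "tmon (j, \<lambda>_. 0) = v powi j"
  by (simp add: tmon_def Xmon_zero)

lemma lincomb_tmon_eq_0:
  assumes "torus_coeffs c" "lincomb tmon c = 0"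
  shows "c = (\<lambda>_. 0)"
proof -
  have H: "\<forall>S c. finite S \<longrightarrow> S \<subseteq> UNIV \<times> Zm m \<longrightarrow>
        (\<Sum>p\<in>S. of_int (c p) * v powi (fst p) * mon (snd p)) = 0 \<longrightarrow> (\<forall>p\<in>S. c p = 0)"
    using qtorus_frac unfolding qtorus_frac_def by (elim conjE)
  have sum0: "(\<Sum>p\<in>supp c. of_int (c p) * v powi (fst p) * mon (snd p)) = 0"
    using assms(2) by (simp add: lincomb_def tmon_def mult.assoc)
  have "c p = 0" if "p \<in> supp c" for p
  proof (rule H[rule_format, OF _ _ sum0 that])
    show "finite (supp c)"
      using assms(1) by (simp add: torus_coeffs_def)
    show "supp c \<subseteq> UNIV \<times> Zm m"
      using assms(1) unfolding torus_coeffs_def by force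
  qed
  then show ?thesis
    by (force simp: supp_def)
qed

lemma Zm_add: "\<alpha> \<in> Zm m \<Longrightarrow> \<beta> \<in> Zm m \<Longrightarrow> (\<lambda>i. \<alpha> i + \<beta> i) \<in> Zm m"
  and Zm_zero: "(\<lambda>_. 0) \<in> Zm m"
  and unitvec_Zm: "i < m \<Longrightarrow> unitvec i \<in> Zm m"
  by (simp_all add: Zm_def unitvec_def)

lemma torus_coeffs_add:
  assumes "torus_coeffs c" "torus_coeffs d"
  shows "torus_coeffs (\<lambda>p. c p + d p)"
proof -
  have "snd ` (supp c \<union> supp d) \<subseteq> Zm m" "finite (supp c \<union> supp d)"
    using assms by (simp_all add: torus_coeffs_def image_Un)
  then show ?thesis
    unfolding torus_coeffs_def using supp_add[of c d] by (meson finite_subset image_mono order_trans)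
qed

lemma torus_coeffs_uminus: "torus_coeffs c \<Longrightarrow> torus_coeffs (\<lambda>p. - c p)"
  by (simp add: torus_coeffs_def)

lemma torus_coeffs_convolution:
  assumes "torus_coeffs c" "torus_coeffs d"
  shows "torus_coeffs (convolution tmon_index_mult c d)"
proof -
  have "snd p \<in> Zm m" if "p \<in> supp (convolution tmon_index_mult c d)" for p
    using supp_convolution[OF that] assms
    by (force simp: torus_coeffs_def tmon_index_mult_def intro!: Zm_add)
  with assms show ?thesis
    by (auto simp: torus_coeffs_def finite_supp_convolution)
qed

lemma torus_coeffs_delta: "snd q \<in> Zm m \<Longrightarrow> torus_coeffs (\<lambda>p. if p = q then z else 0)"
  by (simp add: torus_coeffs_def)

lemma torus_coeffs_push_coeffs:
  "finite I \<Longrightarrow> (\<And>i. i \<in> I \<Longrightarrow> snd (key i) \<in> Zm m) \<Longrightarrow> torus_coeffs (push_coeffs I key w)"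
  using supp_push_coeffs[of I key w] by (auto simp: torus_coeffs_def finite_supp_push_coeffs)

lemma lincomb_tmon_add:
  "torus_coeffs c \<Longrightarrow> torus_coeffs d \<Longrightarrow> lincomb tmon (\<lambda>p. c p + d p) = lincomb tmon c + lincomb tmon d"
  by (simp add: lincomb_add torus_coeffs_def)

lemma lincomb_tmon_mult:
  "torus_coeffs c \<Longrightarrow> torus_coeffs d \<Longrightarrow>
     lincomb tmon c * lincomb tmon d = lincomb tmon (convolution tmon_index_mult c d)"
  by (simp add: lincomb_mult tmon_mult torus_coeffs_def)

lemma tmon_in_torus: "snd q \<in> Zm m \<Longrightarrow> tmon q \<in> torus"
  using lincomb_delta[of tmon q 1] torus_coeffs_delta[of q 1] unfolding torus_def by force

lemma Xmon_in_torus: "\<alpha> \<in> Zm m \<Longrightarrow> mon \<alpha> \<in> torus"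
  using tmon_in_torus[of "(0, \<alpha>)"] by (simp add: tmon_def)

lemma one_in_torus: "1 \<in> torus"
  and v_in_torus: "v \<in> torus"
  and X_in_torus: "i < m \<Longrightarrow> X i \<in> torus"
  using Xmon_in_torus[OF Zm_zero] tmon_in_torus[of "(1, \<lambda>_. 0)"] Xmon_in_torus[OF unitvec_Zm, of i]
  by (simp_all add: Xmon_zero tmon_scalar Zm_zero Xmon_unitvec)

lemma torus_add: "x \<in> torus \<Longrightarrow> y \<in> torus \<Longrightarrow> x + y \<in> torus"
  unfolding torus_def by (auto simp flip: lincomb_tmon_add intro!: imageI torus_coeffs_add)

lemma torus_mult: "x \<in> torus \<Longrightarrow> y \<in> torus \<Longrightarrow> x * y \<in> torus"
  unfolding torus_def by (auto simp: lincomb_tmon_mult intro!: imageI torus_coeffs_convolution)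

lemma torus_uminus: "x \<in> torus \<Longrightarrow> - x \<in> torus"
  unfolding torus_def by (auto simp flip: lincomb_uminus intro!: imageI torus_coeffs_uminus)

lemma zero_in_torus: "0 \<in> torus"
  using torus_add[OF one_in_torus torus_uminus[OF one_in_torus]] by simp

lemma torus_sum: "finite S \<Longrightarrow> (\<And>x. x \<in> S \<Longrightarrow> g x \<in> torus) \<Longrightarrow> sum g S \<in> torus"
  by (induction S rule: finite_induct) (simp_all add: zero_in_torus torus_add)

end


section \<open>Laurent polynomials in \<open>v\<close> and the Ore condition\<close>

lemma lev_eq_lincomb: "lev v c = lincomb (\<lambda>j. v powi j) c"
  by (simp add: lev_def lincomb_def supp_def)

lemma lev_delta: "lev v (\<lambda>i. if i = j then z else 0) = of_int z * v powi j"
  by (simp add: lev_eq_lincomb lincomb_delta)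

context quantum_torus
begin

definition scalars :: "'a set" where
  "scalars = {lev v c | c. finite (supp c)}"

lemma scalarsI: "finite (supp c) \<Longrightarrow> lev v c \<in> scalars"
  unfolding scalars_def by blast

lemma scalarsE:
  assumes "z \<in> scalars"
  obtains c where "z = lev v c" "finite (supp c)"
  using assms unfolding scalars_def by blast

lemma scalars_central: "z \<in> scalars \<Longrightarrow> central z"
  by (auto simp: scalars_def lev_def)

lemma v_powi_in_scalars: "v powi j \<in> scalars"
  using scalarsI[of "\<lambda>i. if i = j then 1 else 0"] by (simp add: lev_delta)

lemma zero_in_scalars: "0 \<in> scalars"
  using scalarsI[of "\<lambda>_. 0"] by (simp add: lev_def)

lemma scalars_add:
  assumes "x \<in> scalars" "y \<in> scalars"
  shows "x + y \<in> scalars"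
proof -
  obtain c d where cd: "x = lev v c" "finite (supp c)" "y = lev v d" "finite (supp d)"
    using assms by (meson scalarsE)
  moreover have "finite (supp (\<lambda>p. c p + d p))"
    by (rule finite_subset[OF supp_add]) (use cd in simp)
  ultimately show ?thesis
    using scalarsI[of "\<lambda>p. c p + d p"] by (simp add: lev_eq_lincomb lincomb_add)
qed

lemma scalars_uminus: "x \<in> scalars \<Longrightarrow> - x \<in> scalars"
  by (elim scalarsE) (simp add: lev_eq_lincomb scalarsI[unfolded lev_eq_lincomb] flip: lincomb_uminus)

lemma scalars_mult: "x \<in> scalars \<Longrightarrow> y \<in> scalars \<Longrightarrow> x * y \<in> scalars"
  by (elim scalarsE)
    (simp add: lev_eq_lincomb lincomb_mult v_powi_add finite_supp_convolution scalarsI[unfolded lev_eq_lincomb])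

lemma scalars_in_torus: "z \<in> scalars \<Longrightarrow> z \<in> torus"
proof -
  assume "z \<in> scalars"
  then obtain c where c: "z = lev v c" "finite (supp c)"
    unfolding scalars_def by blast
  let ?c' = "push_coeffs (supp c) (\<lambda>j. (j, \<lambda>_. 0)) c"
  have "z = lincomb tmon ?c'"
    using c by (simp add: lincomb_push_coeffs tmon_scalar lev_def supp_def)
  moreover have "torus_coeffs ?c'"
    using c(2) by (intro torus_coeffs_push_coeffs) (simp_all add: Zm_zero)
  ultimately show ?thesis
    unfolding torus_def by blast
qed

lemma lincomb_tmon_decompose:
  assumes "finite (supp c)" "finite B" "snd ` supp c \<subseteq> B"
  shows "lincomb tmon c = (\<Sum>\<beta>\<in>B. lev v (\<lambda>j. c (j, \<beta>)) * mon \<beta>)"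
proof -
  let ?S = "Sigma B (\<lambda>\<beta>. supp (\<lambda>j. c (j, \<beta>)))"
  have "(\<Sum>\<beta>\<in>B. lev v (\<lambda>j. c (j, \<beta>)) * mon \<beta>) = (\<Sum>(\<beta>, j)\<in>?S. of_int (c (j, \<beta>)) * tmon (j, \<beta>))"
    using assms(2) finite_supp_slice[OF assms(1)]
    by (simp add: sum.Sigma lev_eq_lincomb lincomb_def sum_distrib_right tmon_def mult.assoc)
  also have "\<dots> = lincomb tmon c"
    unfolding lincomb_def using assms(3)
    by (intro sum.reindex_bij_witness[where i = "\<lambda>(j, \<beta>). (\<beta>, j)" and j = "\<lambda>(\<beta>, j). (j, \<beta>)"])
      (auto simp: supp_def)
  finally show ?thesis ..
qed

lemma Xmon_independent_over_scalars:
  assumes "finite A" "A \<subseteq> Zm m" "\<And>\<alpha>. \<alpha> \<in> A \<Longrightarrow> r \<alpha> \<in> scalars"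
    and "(\<Sum>\<alpha>\<in>A. r \<alpha> * mon \<alpha>) = 0"
  shows "\<alpha> \<in> A \<Longrightarrow> r \<alpha> = 0"
proof -
  have "\<forall>\<alpha>\<in>A. \<exists>c. r \<alpha> = lev v c \<and> finite (supp c)"
    using assms(3) unfolding scalars_def by blast
  then obtain c where c: "\<forall>\<alpha>\<in>A. r \<alpha> = lev v (c \<alpha>) \<and> finite (supp (c \<alpha>))"
    by (metis (no_types) bchoice)
  define w where "w p = (if snd p \<in> A then c (snd p) (fst p) else 0)" for p
  have supp_w: "supp w \<subseteq> (\<Union>\<alpha>\<in>A. supp (c \<alpha>) \<times> {\<alpha>})"
    by (auto simp: w_def supp_def split: if_splits)
  have "finite (\<Union>\<alpha>\<in>A. supp (c \<alpha>) \<times> {\<alpha>})"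
    using assms(1) c by auto
  then have coeffs: "torus_coeffs w"
    unfolding torus_coeffs_def using supp_w assms(2) finite_subset by fastforce
  have "lincomb tmon w = (\<Sum>\<alpha>\<in>A. r \<alpha> * mon \<alpha>)"
    using coeffs assms(1) supp_w c by (subst lincomb_tmon_decompose) (auto simp: torus_coeffs_def w_def)
  then have "w = (\<lambda>_. 0)"
    using lincomb_tmon_eq_0 coeffs assms(4) by simp
  then have "c \<alpha> = (\<lambda>_. 0)" if "\<alpha> \<in> A" for \<alpha>
    using that unfolding fun_eq_iff w_def by (metis fst_conv snd_conv)
  then show "\<alpha> \<in> A \<Longrightarrow> r \<alpha> = 0"
    using c by (simp add: lev_def)
qed

end

lemma pivot_elimination_sum:
  fixes M :: "'e \<Rightarrow> 'u \<Rightarrow> 'a::ring"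
  assumes "finite U" "j \<in> U"
  shows "(\<Sum>u\<in>U. M e' u * (if u = j then - (\<Sum>u'\<in>U - {j}. M e u' * y u') else M e j * y u))
       = (\<Sum>u\<in>U - {j}. (M e' u * M e j - M e' j * M e u) * y u)"
proof -
  let ?x = "\<lambda>u. if u = j then - (\<Sum>u'\<in>U - {j}. M e u' * y u') else M e j * y u"
  have "(\<Sum>u\<in>U. M e' u * ?x u) = M e' j * ?x j + (\<Sum>u\<in>U - {j}. M e' u * ?x u)"
    using assms by (rule sum.remove)
  also have "\<dots> = - (\<Sum>u\<in>U - {j}. M e' j * M e u * y u) + (\<Sum>u\<in>U - {j}. M e' u * M e j * y u)"
    by (simp add: sum_distrib_left mult.assoc)
  also have "\<dots> = (\<Sum>u\<in>U - {j}. (M e' u * M e j - M e' j * M e u) * y u)"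
    by (simp add: left_diff_distrib sum_subtractf)
  finally show ?thesis .
qed

locale central_subring =
  fixes R :: "'a::division_ring set"
  assumes zero_mem: "0 \<in> R" and one_mem: "1 \<in> R"
    and add_mem: "x \<in> R \<Longrightarrow> y \<in> R \<Longrightarrow> x + y \<in> R"
    and mult_mem: "x \<in> R \<Longrightarrow> y \<in> R \<Longrightarrow> x * y \<in> R"
    and uminus_mem: "x \<in> R \<Longrightarrow> - x \<in> R"
    and central_mem: "x \<in> R \<Longrightarrow> central x"
begin

lemma sum_mem: "finite S \<Longrightarrow> (\<And>u. u \<in> S \<Longrightarrow> g u \<in> R) \<Longrightarrow> sum g S \<in> R"
  by (induction S rule: finite_induct) (auto intro: zero_mem add_mem)

text \<open>Gaussian elimination with pivot \<open>M e j\<close>: \<open>y\<close> solves the other rows with column \<open>j\<close>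
  eliminated.\<close>

lemma pivot_step:
  assumes "finite U" "j \<in> U" "M e j \<noteq> 0" "\<forall>u\<in>U. M e u \<in> R"
    and y: "\<forall>u\<in>U - {j}. y u \<in> R" "\<exists>u\<in>U - {j}. y u \<noteq> 0"
      "\<forall>e'\<in>E. (\<Sum>u\<in>U - {j}. (M e' u * M e j - M e' j * M e u) * y u) = 0"
  shows "\<exists>x. (\<forall>u\<in>U. x u \<in> R) \<and> (\<exists>u\<in>U. x u \<noteq> 0) \<and> (\<forall>e'\<in>insert e E. (\<Sum>u\<in>U. M e' u * x u) = 0)"
proof -
  define x where "x u = (if u = j then - (\<Sum>u'\<in>U - {j}. M e u' * y u') else M e j * y u)" for u
  have "x u \<in> R" if "u \<in> U" for u
    using that assms(1,2,4) y(1) unfolding x_def by (auto intro!: uminus_mem mult_mem sum_mem)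
  moreover have "\<exists>u\<in>U. x u \<noteq> 0"
    using y(2) assms(3) by (auto simp: x_def)
  moreover have sums: "(\<Sum>u\<in>U. M e' u * x u) = (\<Sum>u\<in>U - {j}. (M e' u * M e j - M e' j * M e u) * y u)"
    for e'
    unfolding x_def using assms(1,2) by (rule pivot_elimination_sum)
  moreover have "M e u * M e j - M e j * M e u = 0" if "u \<in> U" for u
    using that assms(2,4) central_mem centralD by fastforce
  ultimately show ?thesis
    using y(3) by (intro exI[of _ x]) (auto simp: sums)
qed

lemma homogeneous_system_nontrivial_solution:
  "finite E \<Longrightarrow> finite U \<Longrightarrow> card E < card U \<Longrightarrow> \<forall>e\<in>E. \<forall>u\<in>U. M e u \<in> R \<Longrightarrow>
    \<exists>x. (\<forall>u\<in>U. x u \<in> R) \<and> (\<exists>u\<in>U. x u \<noteq> 0) \<and> (\<forall>e\<in>E. (\<Sum>u\<in>U. M e u * x u) = 0)"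
proof (induction E arbitrary: U M rule: finite_induct)
  case empty
  then obtain u0 where "u0 \<in> U"
    by fastforce
  then show ?case
    by (intro exI[of _ "\<lambda>u. if u = u0 then 1 else 0"]) (auto simp: zero_mem one_mem)
next
  case (insert e E)
  show ?case
  proof (cases "\<forall>u\<in>U. M e u = 0")
    case True
    have "card E < card U"
      using insert.prems(2) insert.hyps by simp
    then obtain x where "\<forall>u\<in>U. x u \<in> R" "\<exists>u\<in>U. x u \<noteq> 0" "\<forall>e\<in>E. (\<Sum>u\<in>U. M e u * x u) = 0"
      using insert.IH[of U M] insert.prems(1,3) by blast
    with True show ?thesis
      by auto
  next
    case False
    then obtain j where j: "j \<in> U" "M e j \<noteq> 0"
      by blast
    let ?M' = "\<lambda>e' u. M e' u * M e j - M e' j * M e u"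
    have "\<forall>e'\<in>E. \<forall>u\<in>U - {j}. ?M' e' u \<in> R"
      using insert.prems(3) j unfolding diff_conv_add_uminus by (blast intro: add_mem mult_mem uminus_mem)
    moreover have "card E < card (U - {j})"
      using insert j by simp
    ultimately obtain y where "\<forall>u\<in>U - {j}. y u \<in> R" "\<exists>u\<in>U - {j}. y u \<noteq> 0"
        "\<forall>e'\<in>E. (\<Sum>u\<in>U - {j}. ?M' e' u * y u) = 0"
      using insert.IH[of "U - {j}" ?M'] insert.prems by blast
    then show ?thesis
      using insert.prems(1,3) j by (intro pivot_step) auto
  qed
qed

end

lemma power_add_mult_diff_le:
  fixes x D :: int
  assumes "D \<ge> 0" "x \<ge> int n * D"
  shows "(x + D) ^ n * (x - int n * D) \<le> x ^ Suc n"
  using assms(2)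
proof (induction n)
  case (Suc n)
  have "x \<ge> 0"
    using Suc.prems assms(1) by (smt (verit) mult_nonneg_nonneg of_nat_0_le_iff)
  have "x \<ge> int n * D"
    using Suc.prems assms(1) by (simp add: algebra_simps)
  have step: "(x + D) * (x - int (Suc n) * D) \<le> x * (x - int n * D)"
  proof -
    have "(x + D) * (x - int (Suc n) * D) = x * (x - int n * D) - (int n + 1) * (D * D)"
      by (simp add: algebra_simps)
    then show ?thesis
      by (smt (verit) mult_nonneg_nonneg zero_le_square of_nat_0_le_iff)
  qed
  have "(x + D) ^ Suc n * (x - int (Suc n) * D) = (x + D) ^ n * ((x + D) * (x - int (Suc n) * D))"
    by (simp add: algebra_simps)
  also have "\<dots> \<le> (x + D) ^ n * (x * (x - int n * D))"
    using step \<open>x \<ge> 0\<close> assms(1) by (simp add: mult_left_mono)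
  also have "\<dots> = x * ((x + D) ^ n * (x - int n * D))"
    by (simp add: algebra_simps)
  also have "\<dots> \<le> x * x ^ Suc n"
    using Suc.IH[OF \<open>x \<ge> int n * D\<close>] \<open>x \<ge> 0\<close> by (rule mult_left_mono)
  finally show ?case
    by simp
qed simp

lemma box_volume_less_double: "\<exists>N::nat. (2 * (N + d) + 1) ^ m < 2 * (2 * N + 1) ^ m"
proof -
  define N where "N = m * (2 * d)"
  define D x where "D = int (2 * d)" and "x = int (2 * N + 1)"
  have "(x + D) ^ m * (x - int m * D) \<le> x ^ Suc m"
    by (rule power_add_mult_diff_le) (simp_all add: x_def N_def D_def)
  then have "(x + D) ^ m * (x - int m * D) \<le> x ^ m * x"
    by (simp add: mult.commute)
  also have "\<dots> < x ^ m * (2 * (x - int m * D))"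
  proof -
    have "x > 0"
      by (simp add: x_def)
    moreover have "x < 2 * (x - int m * D)"
      by (simp add: x_def N_def D_def)
    ultimately show ?thesis
      by simp
  qed
  finally have "(x + D) ^ m * (x - int m * D) < (2 * x ^ m) * (x - int m * D)"
    by (simp add: algebra_simps)
  then have "(x + D) ^ m < 2 * x ^ m"
    by (simp add: mult_less_cancel_right x_def N_def D_def)
  moreover have "x + D = int (2 * (N + d) + 1)"
    by (simp add: x_def D_def)
  ultimately have "int ((2 * (N + d) + 1) ^ m) < int (2 * (2 * N + 1) ^ m)"
    by (simp add: x_def algebra_simps)
  then show ?thesis
    by (intro exI[of _ N]) linarith
qed

definition box :: "nat \<Rightarrow> nat \<Rightarrow> (nat \<Rightarrow> int) set" where
  "box m N = {\<alpha>. (\<forall>i<m. \<bar>\<alpha> i\<bar> \<le> int N) \<and> (\<forall>i\<ge>m. \<alpha> i = 0)}"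

lemma box_subset_Zm: "box m N \<subseteq> Zm m"
  by (auto simp: box_def Zm_def)

lemma box_eq_image_PiE:
  "box m N = (\<lambda>f i. if i < m then f i else 0) ` (PiE {..<m} (\<lambda>_. {- int N..int N}))"
proof (intro equalityI subsetI)
  fix \<alpha> assume "\<alpha> \<in> box m N"
  then have "restrict \<alpha> {..<m} \<in> PiE {..<m} (\<lambda>_. {- int N..int N})"
    and "\<alpha> = (\<lambda>i. if i < m then restrict \<alpha> {..<m} i else 0)"
    by (auto simp: box_def abs_le_iff)
  then show "\<alpha> \<in> (\<lambda>f i. if i < m then f i else 0) ` (PiE {..<m} (\<lambda>_. {- int N..int N}))"
    by blast
qed (auto simp: box_def PiE_def Pi_def abs_le_iff)

lemma finite_box: "finite (box m N)"
  unfolding box_eq_image_PiE by (simp add: finite_PiE)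

lemma card_box: "card (box m N) = (2 * N + 1) ^ m"
proof -
  have "inj_on (\<lambda>f i. if i < m then f i else (0::int)) (PiE {..<m} (\<lambda>_. {- int N..int N}))"
  proof (rule inj_onI)
    fix f g assume f: "f \<in> PiE {..<m} (\<lambda>_. {- int N..int N})" and g: "g \<in> PiE {..<m} (\<lambda>_. {- int N..int N})"
      and eq: "(\<lambda>i. if i < m then f i else 0) = (\<lambda>i. if i < m then g i else 0)"
    show "f = g"
    proof (rule PiE_ext[OF f g])
      fix i assume "i \<in> {..<m}"
      then show "f i = g i"
        using fun_cong[OF eq, of i] by simp
    qed
  qed
  then have "card (box m N) = card (PiE {..<m} (\<lambda>_. {- int N..int N}))"
    unfolding box_eq_image_PiE by (rule card_image)
  then show ?thesis
    by (simp add: card_PiE nat_add_distrib nat_mult_distrib)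
qed

lemma finite_subset_box: "finite A \<Longrightarrow> A \<subseteq> Zm m \<Longrightarrow> \<exists>d. A \<subseteq> box m d"
proof (induction A rule: finite_induct)
  case (insert \<alpha> A)
  then obtain d where "A \<subseteq> box m d"
    by auto
  moreover have "\<bar>\<alpha> i\<bar> \<le> int (nat (\<Sum>i<m. \<bar>\<alpha> i\<bar>))" if "i < m" for i
  proof -
    have "\<bar>\<alpha> i\<bar> \<le> (\<Sum>i<m. \<bar>\<alpha> i\<bar>)"
      by (rule member_le_sum) (use that in auto)
    then show ?thesis
      by simp
  qed
  ultimately have "insert \<alpha> A \<subseteq> box m (max d (nat (\<Sum>i<m. \<bar>\<alpha> i\<bar>)))"
    using insert.prems by (force simp: box_def Zm_def)
  then show ?case ..
qed simp

lemma box_add: "\<beta> \<in> box m d \<Longrightarrow> \<alpha> \<in> box m N \<Longrightarrow> (\<lambda>i. \<beta> i + \<alpha> i) \<in> box m (N + d)"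
  by (force simp: box_def abs_le_iff)

lemma sum_box_shift:
  assumes "\<alpha> \<in> box m N"
  shows "(\<Sum>\<beta>\<in>box m d. F \<beta> (\<lambda>i. \<beta> i + \<alpha> i))
       = (\<Sum>\<gamma>\<in>box m (N + d). if (\<lambda>i. \<gamma> i - \<alpha> i) \<in> box m d then F (\<lambda>i. \<gamma> i - \<alpha> i) \<gamma> else 0)"
proof -
  have "(\<Sum>\<beta>\<in>box m d. F \<beta> (\<lambda>i. \<beta> i + \<alpha> i))
      = (\<Sum>\<gamma>\<in>{\<gamma>\<in>box m (N + d). (\<lambda>i. \<gamma> i - \<alpha> i) \<in> box m d}. F (\<lambda>i. \<gamma> i - \<alpha> i) \<gamma>)"
    using box_add[OF _ assms]
    by (intro sum.reindex_bij_witness[where i = "\<lambda>\<gamma> i. \<gamma> i - \<alpha> i" and j = "\<lambda>\<beta> i. \<beta> i + \<alpha> i"]) auto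
  also have "\<dots> = (\<Sum>\<gamma>\<in>box m (N + d). if (\<lambda>i. \<gamma> i - \<alpha> i) \<in> box m d then F (\<lambda>i. \<gamma> i - \<alpha> i) \<gamma> else 0)"
    by (rule sum.inter_filter) (rule finite_box)
  finally show ?thesis .
qed

context quantum_torus
begin

lemma central_subring_scalars: "central_subring scalars"
  using v_powi_in_scalars[of 0]
  by unfold_locales (simp_all add: zero_in_scalars scalars_add scalars_mult scalars_uminus scalars_central)

definition shift_coeff :: "((nat \<Rightarrow> int) \<Rightarrow> 'a) \<Rightarrow> nat \<Rightarrow> (nat \<Rightarrow> int) \<Rightarrow> (nat \<Rightarrow> int) \<Rightarrow> 'a" where
  "shift_coeff K d \<gamma> \<alpha> = (if (\<lambda>i. \<gamma> i - \<alpha> i) \<in> box m d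
     then K (\<lambda>i. \<gamma> i - \<alpha> i) * v powi bform m \<Lambda> (\<lambda>i. \<gamma> i - \<alpha> i) \<alpha> else 0)"

lemma shift_coeff_in_scalars: "(\<And>\<beta>. K \<beta> \<in> scalars) \<Longrightarrow> shift_coeff K d \<gamma> \<alpha> \<in> scalars"
  by (simp add: shift_coeff_def zero_in_scalars scalars_mult v_powi_in_scalars)

lemma box_sum_mult:
  assumes "\<And>\<beta>. central (K \<beta>)" "\<And>\<alpha>. central (y \<alpha>)"
  shows "(\<Sum>\<beta>\<in>box m d. K \<beta> * mon \<beta>) * (\<Sum>\<alpha>\<in>box m N. y \<alpha> * mon \<alpha>)
       = (\<Sum>\<gamma>\<in>box m (N + d). (\<Sum>\<alpha>\<in>box m N. shift_coeff K d \<gamma> \<alpha> * y \<alpha>) * mon \<gamma>)"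
proof -
  define G where "G \<beta> \<alpha> \<gamma> = K \<beta> * v powi bform m \<Lambda> \<beta> \<alpha> * y \<alpha> * mon \<gamma>" for \<beta> \<alpha> \<gamma>
  have "K \<beta> * mon \<beta> * (y \<alpha> * mon \<alpha>) = G \<beta> \<alpha> (\<lambda>i. \<beta> i + \<alpha> i)" for \<alpha> \<beta>
    using central_lcomm[OF assms(2), of "mon \<beta>" \<alpha> "mon \<alpha>"]
    by (simp add: G_def Xmon_mult mult.assoc v_powi_lcommute[of "y \<alpha>"])
  then have "(\<Sum>\<beta>\<in>box m d. K \<beta> * mon \<beta>) * (\<Sum>\<alpha>\<in>box m N. y \<alpha> * mon \<alpha>)
      = (\<Sum>\<alpha>\<in>box m N. \<Sum>\<beta>\<in>box m d. G \<beta> \<alpha> (\<lambda>i. \<beta> i + \<alpha> i))"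
    by (simp add: sum_product sum.swap[of _ "box m d"])
  also have "\<dots> = (\<Sum>\<alpha>\<in>box m N. \<Sum>\<gamma>\<in>box m (N + d).
                      if (\<lambda>i. \<gamma> i - \<alpha> i) \<in> box m d then G (\<lambda>i. \<gamma> i - \<alpha> i) \<alpha> \<gamma> else 0)"
    by (intro sum.cong refl sum_box_shift)
  also have "\<dots> = (\<Sum>\<gamma>\<in>box m (N + d). \<Sum>\<alpha>\<in>box m N.
                      if (\<lambda>i. \<gamma> i - \<alpha> i) \<in> box m d then G (\<lambda>i. \<gamma> i - \<alpha> i) \<alpha> \<gamma> else 0)"
    by (rule sum.swap)
  also have "\<dots> = (\<Sum>\<gamma>\<in>box m (N + d). (\<Sum>\<alpha>\<in>box m N. shift_coeff K d \<gamma> \<alpha> * y \<alpha>) * mon \<gamma>)"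
    unfolding sum_distrib_right G_def shift_coeff_def by (intro sum.cong refl) simp
  finally show ?thesis .
qed

lemma torus_box_expansion:
  assumes "a \<in> torus" "s \<in> torus"
  obtains K1 K2 d where "\<And>\<beta>. K1 \<beta> \<in> scalars" "\<And>\<beta>. K2 \<beta> \<in> scalars"
    "a = (\<Sum>\<beta>\<in>box m d. K1 \<beta> * mon \<beta>)" "s = (\<Sum>\<beta>\<in>box m d. K2 \<beta> * mon \<beta>)"
proof -
  obtain c1 c2 where c1: "torus_coeffs c1" "a = lincomb tmon c1" and c2: "torus_coeffs c2" "s = lincomb tmon c2"
    using assms unfolding torus_def by blast
  have "finite (snd ` (supp c1 \<union> supp c2))" "snd ` (supp c1 \<union> supp c2) \<subseteq> Zm m"
    using c1 c2 by (auto simp: torus_coeffs_def)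
  then obtain d where d: "snd ` (supp c1 \<union> supp c2) \<subseteq> box m d"
    using finite_subset_box by blast
  show ?thesis
  proof
    show "lev v (\<lambda>j. c1 (j, \<beta>)) \<in> scalars" "lev v (\<lambda>j. c2 (j, \<beta>)) \<in> scalars" for \<beta>
      using c1(1) c2(1) by (auto simp: torus_coeffs_def intro: scalarsI finite_supp_slice)
    show "a = (\<Sum>\<beta>\<in>box m d. lev v (\<lambda>j. c1 (j, \<beta>)) * mon \<beta>)"
      "s = (\<Sum>\<beta>\<in>box m d. lev v (\<lambda>j. c2 (j, \<beta>)) * mon \<beta>)"
      using c1 c2 d by (auto simp: torus_coeffs_def finite_box intro!: lincomb_tmon_decompose)
  qed
qed

text \<open>The coefficients of \<open>a u = s w\<close>: one equation per monomial of \<open>box m (N + d)\<close>, two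
  unknowns per monomial of \<open>box m N\<close>.\<close>

lemma box_coefficient_system:
  assumes "\<And>\<beta>. K1 \<beta> \<in> scalars" "\<And>\<beta>. K2 \<beta> \<in> scalars"
    and N: "(2 * (N + d) + 1) ^ m < 2 * (2 * N + 1) ^ m"
  obtains y1 y2 where "\<And>\<alpha>. y1 \<alpha> \<in> scalars" "\<And>\<alpha>. y2 \<alpha> \<in> scalars"
    "\<exists>\<alpha>\<in>box m N. y1 \<alpha> \<noteq> 0 \<or> y2 \<alpha> \<noteq> 0"
    "\<And>\<gamma>. \<gamma> \<in> box m (N + d) \<Longrightarrow>
       (\<Sum>\<alpha>\<in>box m N. shift_coeff K1 d \<gamma> \<alpha> * y1 \<alpha>) = (\<Sum>\<alpha>\<in>box m N. shift_coeff K2 d \<gamma> \<alpha> * y2 \<alpha>)"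
proof -
  interpret central_subring scalars
    by (rule central_subring_scalars)
  define M where "M \<gamma> \<xi> = (case \<xi> of Inl \<alpha> \<Rightarrow> shift_coeff K1 d \<gamma> \<alpha> | Inr \<alpha> \<Rightarrow> - shift_coeff K2 d \<gamma> \<alpha>)"
    for \<gamma> \<xi>
  let ?U = "box m N <+> box m N"
  have "\<exists>x. (\<forall>\<xi>\<in>?U. x \<xi> \<in> scalars) \<and> (\<exists>\<xi>\<in>?U. x \<xi> \<noteq> 0)
          \<and> (\<forall>\<gamma>\<in>box m (N + d). (\<Sum>\<xi>\<in>?U. M \<gamma> \<xi> * x \<xi>) = 0)"
  proof (rule homogeneous_system_nontrivial_solution)
    show "card (box m (N + d)) < card ?U"
      using N by (simp add: card_box card_Plus finite_box)
    show "\<forall>\<gamma>\<in>box m (N + d). \<forall>\<xi>\<in>?U. M \<gamma> \<xi> \<in> scalars"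
      using assms(1,2) by (auto simp: M_def shift_coeff_in_scalars scalars_uminus split: sum.splits)
  qed (simp_all add: finite_box)
  then obtain x where x: "\<forall>\<xi>\<in>?U. x \<xi> \<in> scalars" "\<exists>\<xi>\<in>?U. x \<xi> \<noteq> 0"
      "\<forall>\<gamma>\<in>box m (N + d). (\<Sum>\<xi>\<in>?U. M \<gamma> \<xi> * x \<xi>) = 0"
    by blast
  show ?thesis
  proof
    show "(\<lambda>\<alpha>. if \<alpha> \<in> box m N then x (Inl \<alpha>) else 0) \<alpha> \<in> scalars"
      "(\<lambda>\<alpha>. if \<alpha> \<in> box m N then x (Inr \<alpha>) else 0) \<alpha> \<in> scalars" for \<alpha>
      using x(1) by (auto simp: zero_in_scalars)
    show "\<exists>\<alpha>\<in>box m N. (if \<alpha> \<in> box m N then x (Inl \<alpha>) else 0) \<noteq> 0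
        \<or> (if \<alpha> \<in> box m N then x (Inr \<alpha>) else 0) \<noteq> 0"
      using x(2) by (auto simp: Plus_def)
    show "(\<Sum>\<alpha>\<in>box m N. shift_coeff K1 d \<gamma> \<alpha> * (if \<alpha> \<in> box m N then x (Inl \<alpha>) else 0))
        = (\<Sum>\<alpha>\<in>box m N. shift_coeff K2 d \<gamma> \<alpha> * (if \<alpha> \<in> box m N then x (Inr \<alpha>) else 0))"
      if "\<gamma> \<in> box m (N + d)" for \<gamma>
      using x(3) that by (simp add: M_def sum.Plus finite_box sum_negf)
  qed
qed

lemma torus_right_ore:
  assumes "a \<in> torus" "s \<in> torus" "s \<noteq> 0"
  shows "\<exists>u w. u \<in> torus \<and> w \<in> torus \<and> u \<noteq> 0 \<and> a * u = s * w"
proof -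
  obtain K1 K2 d where K: "\<And>\<beta>. K1 \<beta> \<in> scalars" "\<And>\<beta>. K2 \<beta> \<in> scalars"
    and a: "a = (\<Sum>\<beta>\<in>box m d. K1 \<beta> * mon \<beta>)" and s: "s = (\<Sum>\<beta>\<in>box m d. K2 \<beta> * mon \<beta>)"
    using torus_box_expansion[OF assms(1,2)] by blast
  obtain N where N: "(2 * (N + d) + 1) ^ m < 2 * (2 * N + 1) ^ m"
    using box_volume_less_double by blast
  obtain y1 y2 where y: "\<And>\<alpha>. y1 \<alpha> \<in> scalars" "\<And>\<alpha>. y2 \<alpha> \<in> scalars"
    "\<exists>\<alpha>\<in>box m N. y1 \<alpha> \<noteq> 0 \<or> y2 \<alpha> \<noteq> 0"
    "\<And>\<gamma>. \<gamma> \<in> box m (N + d) \<Longrightarrow>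
       (\<Sum>\<alpha>\<in>box m N. shift_coeff K1 d \<gamma> \<alpha> * y1 \<alpha>) = (\<Sum>\<alpha>\<in>box m N. shift_coeff K2 d \<gamma> \<alpha> * y2 \<alpha>)"
    using box_coefficient_system[of K1 K2 N d, OF K N] by blast
  define u w where "u = (\<Sum>\<alpha>\<in>box m N. y1 \<alpha> * mon \<alpha>)" and "w = (\<Sum>\<alpha>\<in>box m N. y2 \<alpha> * mon \<alpha>)"
  have "y \<alpha> * mon \<alpha> \<in> torus" if "y \<alpha> \<in> scalars" "\<alpha> \<in> box m N" for y \<alpha>
    using that box_subset_Zm by (blast intro: torus_mult scalars_in_torus Xmon_in_torus)
  then have "u \<in> torus" "w \<in> torus"
    unfolding u_def w_def using y(1,2) by (simp_all add: torus_sum finite_box)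
  moreover have "a * u = s * w"
    unfolding a s u_def w_def using K y(1,2,4) by (simp add: box_sum_mult scalars_central)
  moreover have "u \<noteq> 0"
  proof
    assume "u = 0"
    with \<open>a * u = s * w\<close> \<open>s \<noteq> 0\<close> have "w = 0"
      by simp
    then show False
      using \<open>u = 0\<close> y(1-3) Xmon_independent_over_scalars[OF finite_box box_subset_Zm]
      unfolding u_def w_def by metis
  qed
  ultimately show ?thesis
    by blast
qed

end


section \<open>The monomial isomorphism of a mutation step\<close>

locale mutation_tori =
  fixes m n k :: nat and r :: "nat \<Rightarrow> nat"
    and B \<Lambda> \<Lambda>' :: "nat \<Rightarrow> nat \<Rightarrow> int" and \<delta> :: "nat \<Rightarrow> int"
    and va :: "'a::division_ring" and X :: "nat \<Rightarrow> 'a"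
    and vb :: "'b::division_ring" and X' :: "nat \<Rightarrow> 'b"
  assumes k_less_n: "k < n" and n_le_m: "n \<le> m"
    and compatible: "compatible_pair m n B \<Lambda> \<delta>"
    and torus_a: "qtorus_frac va m \<Lambda> X"
    and mutated_lambda:
      "\<forall>i<m. \<forall>j<m. \<Lambda>' i j = matmul m (transp (Emat B r k 1)) (matmul m \<Lambda> (Emat B r k 1)) i j"
    and torus_b: "qtorus_frac vb m \<Lambda>' X'"
begin

abbreviation E :: "int \<Rightarrow> nat \<Rightarrow> nat \<Rightarrow> int" where
  "E \<equiv> Emat B r k"

abbreviation b :: "nat \<Rightarrow> int" where
  "b \<equiv> col m B k"

lemma k_less_m: "k < m"
  using k_less_n n_le_m by simp

lemma skew_lambda: "i < m \<Longrightarrow> j < m \<Longrightarrow> \<Lambda> i j = - \<Lambda> j i"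
  using compatible unfolding compatible_pair_def by blast

lemma delta_pos: "\<delta> k > 0"
  and compatible_col: "j < m \<Longrightarrow> (\<Sum>i<m. B i k * \<Lambda> i j) = (if j = k then \<delta> k else 0)"
  using compatible k_less_n unfolding compatible_pair_def by blast+

sublocale A: quantum_torus va m \<Lambda> X
  using torus_a skew_lambda by unfold_locales

text \<open>This is where compatibility of \<open>(B, \<Lambda>)\<close> enters.\<close>

lemma bform_col: "bform m \<Lambda> \<beta> b = - \<beta> k * \<delta> k"
proof -
  have "(\<Sum>j<m. \<Lambda> i j * b j) = - (if i = k then \<delta> k else 0)" if "i < m" for i
  proof -
    have "(\<Sum>j<m. \<Lambda> i j * b j) = (\<Sum>j<m. - (B j k * \<Lambda> j i))"
      using that by (intro sum.cong refl) (simp add: col_def skew_lambda[of i])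
    then show ?thesis
      using compatible_col[OF that] by (simp add: sum_negf)
  qed
  then have "bform m \<Lambda> \<beta> b = (\<Sum>i<m. - (if i = k then \<beta> k * \<delta> k else 0))"
    unfolding bform_def by (intro sum.cong refl) (simp add: mult.assoc flip: sum_distrib_left)
  also have "\<dots> = - \<beta> k * \<delta> k"
    using k_less_m by (simp add: sum_negf)
  finally show ?thesis .
qed

lemma B_kk: "B k k = 0"
  using bform_col[of b] A.bform_self[of b] delta_pos k_less_m by (simp add: col_def)

lemma mulv_Emat:
  "mulv m (E e) \<alpha> j
     = (if j < m then (if j = k then - \<alpha> k else \<alpha> j + max (- e * B j k * int (r k)) 0 * \<alpha> k) else 0)"
proof (cases "j < m")
  case True
  have "(\<Sum>l<m. E e j l * \<alpha> l) = E e j k * \<alpha> k + (\<Sum>l\<in>{..<m} - {k}. E e j l * \<alpha> l)"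
    using k_less_m by (simp add: sum.remove)
  also have "(\<Sum>l\<in>{..<m} - {k}. E e j l * \<alpha> l) = (\<Sum>l\<in>{..<m} - {k}. if l = j then \<alpha> l else 0)"
    by (intro sum.cong) (auto simp: Emat_def)
  finally show ?thesis
    using True by (auto simp: mulv_def Emat_def)
qed (simp add: mulv_def)

lemma mulv_Emat_minus: "mulv m (E (-1)) \<alpha> = (\<lambda>j. mulv m (E 1) \<alpha> j + \<alpha> k * int (r k) * b j)"
  by (rule ext) (auto simp: mulv_Emat col_def B_kk max_def algebra_simps)

lemma mulv_Emat_unitvec: "i < m \<Longrightarrow> i \<noteq> k \<Longrightarrow> mulv m (E e) (unitvec i) = unitvec i"
  by (rule ext) (auto simp: mulv_Emat unitvec_def)

lemma mulv_Emat_unitvec_k: "mulv m (E e) (unitvec k) k = -1"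
  using k_less_m by (simp add: mulv_Emat unitvec_def)

lemma mulv_in_Zm: "mulv m M \<alpha> \<in> Zm m"
  by (simp add: mulv_def Zm_def)

lemma mulv_zero: "mulv m M (\<lambda>_. 0) = (\<lambda>_. 0)"
  by (rule ext) (simp add: mulv_def)

lemma Emat_involution: "\<alpha> \<in> Zm m \<Longrightarrow> mulv m (E e) (mulv m (E e) \<alpha>) = \<alpha>"
  by (rule ext) (auto simp: mulv_Emat Zm_def k_less_m)

lemma mulv_add: "mulv m M (\<lambda>i. \<alpha> i + \<beta> i) = (\<lambda>i. mulv m M \<alpha> i + mulv m M \<beta> i)"
  by (rule ext) (simp add: mulv_def sum.distrib algebra_simps)

lemma bform_mutated_lambda: "bform m \<Lambda>' \<alpha> \<beta> = bform m \<Lambda> (mulv m (E 1) \<alpha>) (mulv m (E 1) \<beta>)"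
proof -
  define F where "F i j l p = \<alpha> i * E 1 l i * \<Lambda> l p * E 1 p j * \<beta> j" for i j l p
  have "bform m \<Lambda>' \<alpha> \<beta> = (\<Sum>i<m. \<Sum>j<m. \<Sum>l<m. \<Sum>p<m. F i j l p)"
    unfolding bform_def F_def using mutated_lambda
    by (intro sum.cong refl) (simp add: matmul_def transp_def sum_distrib_left sum_distrib_right mult.assoc)
  also have "\<dots> = (\<Sum>i<m. \<Sum>l<m. \<Sum>j<m. \<Sum>p<m. F i j l p)"
    by (rule sum.cong[OF refl], rule sum.swap)
  also have "\<dots> = (\<Sum>i<m. \<Sum>l<m. \<Sum>p<m. \<Sum>j<m. F i j l p)"
    by (rule sum.cong[OF refl], rule sum.cong[OF refl], rule sum.swap)
  also have "\<dots> = (\<Sum>l<m. \<Sum>i<m. \<Sum>p<m. \<Sum>j<m. F i j l p)"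
    by (rule sum.swap)
  also have "\<dots> = (\<Sum>l<m. \<Sum>p<m. \<Sum>i<m. \<Sum>j<m. F i j l p)"
    by (rule sum.cong[OF refl], rule sum.swap)
  also have "\<dots> = bform m \<Lambda> (mulv m (E 1) \<alpha>) (mulv m (E 1) \<beta>)"
    unfolding bform_def F_def mulv_def
    by (intro sum.cong refl) (simp add: sum_distrib_left sum_distrib_right algebra_simps)
  finally show ?thesis .
qed

lemma bform_mutated_lambda_pm:
  assumes "e = 1 \<or> e = -1"
  shows "bform m \<Lambda>' \<alpha> \<beta> = bform m \<Lambda> (mulv m (E e) \<alpha>) (mulv m (E e) \<beta>)"
proof -
  let ?x = "mulv m (E 1) \<alpha>" and ?y = "mulv m (E 1) \<beta>"
  have "?x k = - \<alpha> k" "?y k = - \<beta> k"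
    using k_less_m by (simp_all add: mulv_Emat)
  then have "bform m \<Lambda> (mulv m (E (-1)) \<alpha>) (mulv m (E (-1)) \<beta>) = bform m \<Lambda> ?x ?y"
    using A.bform_swap[of b ?y] A.bform_self[of b] bform_col[of ?x] bform_col[of ?y]
    by (simp add: mulv_Emat_minus bform_add_left bform_add_right bform_scale_left bform_scale_right
        algebra_simps)
  with assms show ?thesis
    using bform_mutated_lambda by auto
qed

lemma skew_mutated_lambda: "i < m \<Longrightarrow> j < m \<Longrightarrow> \<Lambda>' i j = - \<Lambda>' j i"
  using A.bform_swap[of "mulv m (E 1) (unitvec i)" "mulv m (E 1) (unitvec j)"]
  by (simp add: bform_mutated_lambda flip: bform_unitvec)

sublocale B: quantum_torus vb m \<Lambda>' X'
  using torus_b skew_mutated_lambda by unfold_locales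

context
  fixes e :: int
  assumes e: "e = 1 \<or> e = -1"
begin

definition transfer_tmon :: "int \<times> (nat \<Rightarrow> int) \<Rightarrow> 'a" where
  "transfer_tmon p = va powi fst p * A.mon (mulv m (E e) (snd p))"

lemma transfer_tmon_mult: "transfer_tmon p * transfer_tmon q = transfer_tmon (B.tmon_index_mult p q)"
  using A.tmon_mult[of "(fst p, mulv m (E e) (snd p))" "(fst q, mulv m (E e) (snd q))"]
  by (simp add: transfer_tmon_def A.tmon_def A.tmon_index_mult_def B.tmon_index_mult_def
      mulv_add bform_mutated_lambda_pm[OF e])

lemma lincomb_transfer_tmon_eq_0:
  assumes c: "B.torus_coeffs c" and "lincomb transfer_tmon c = 0"
  shows "c = (\<lambda>_. 0)"
proof -
  define key where "key p = (fst p, mulv m (E e) (snd p))" for p :: "int \<times> (nat \<Rightarrow> int)"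
  have fin: "finite (supp c)"
    using c by (simp add: B.torus_coeffs_def)
  have inj: "inj_on key (supp c)"
  proof (rule inj_onI)
    fix p q assume "p \<in> supp c" "q \<in> supp c" "key p = key q"
    then show "p = q"
      using c Emat_involution unfolding B.torus_coeffs_def key_def
      by (metis image_subset_iff prod.collapse prod.inject)
  qed
  have "A.torus_coeffs (push_coeffs (supp c) key c)"
    using fin by (intro A.torus_coeffs_push_coeffs) (simp_all add: key_def mulv_in_Zm)
  moreover have "lincomb A.tmon (push_coeffs (supp c) key c) = 0"
    using assms(2) unfolding lincomb_push_coeffs[OF fin]
    by (simp add: lincomb_def key_def A.tmon_def transfer_tmon_def)
  ultimately have "push_coeffs (supp c) key c = (\<lambda>_. 0)"
    by (rule A.lincomb_tmon_eq_0)
  then have "c p = 0" if "p \<in> supp c" for p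
    using push_coeffs_at_key[OF inj that fin, of c] by simp
  then show ?thesis
    by (force simp: supp_def)
qed

text \<open>Only the values on the torus matter; there the coefficient function is unique by
  \<open>lincomb_tmon_eq_0\<close>.\<close>

definition transfer :: "'b \<Rightarrow> 'a" where
  "transfer x = lincomb transfer_tmon (SOME c. B.torus_coeffs c \<and> x = lincomb B.tmon c)"

lemma transfer_lincomb:
  assumes c: "B.torus_coeffs c"
  shows "transfer (lincomb B.tmon c) = lincomb transfer_tmon c"
proof -
  define c' where "c' = (SOME c'. B.torus_coeffs c' \<and> lincomb B.tmon c = lincomb B.tmon c')"
  have "B.torus_coeffs c' \<and> lincomb B.tmon c = lincomb B.tmon c'"
    unfolding c'_def by (rule someI[of _ c]) (simp add: c)
  then have c': "B.torus_coeffs c'" "lincomb B.tmon c' = lincomb B.tmon c"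
    by simp_all
  have diff: "B.torus_coeffs (\<lambda>p. c' p + - c p)"
    using c c' by (intro B.torus_coeffs_add B.torus_coeffs_uminus)
  have "lincomb B.tmon (\<lambda>p. c' p + - c p) = lincomb B.tmon c' + lincomb B.tmon (\<lambda>p. - c p)"
    using c c' by (intro B.lincomb_tmon_add B.torus_coeffs_uminus)
  also have "\<dots> = 0"
    using c' by (simp add: lincomb_uminus)
  finally have "(\<lambda>p. c' p + - c p) = (\<lambda>_. 0)"
    using diff B.lincomb_tmon_eq_0 by blast
  then have "c' = c"
    by (simp add: fun_eq_iff)
  then show ?thesis
    unfolding transfer_def c'_def by simp
qed

lemma transfer_tmon: "\<alpha> \<in> Zm m \<Longrightarrow> transfer (B.tmon (j, \<alpha>)) = va powi j * A.mon (mulv m (E e) \<alpha>)"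
  using transfer_lincomb[OF B.torus_coeffs_delta[of "(j, \<alpha>)" 1]]
  by (simp add: lincomb_delta transfer_tmon_def)

lemma transfer_add_mult:
  assumes "x \<in> B.torus" "y \<in> B.torus"
  shows "transfer (x + y) = transfer x + transfer y" "transfer (x * y) = transfer x * transfer y"
proof -
  obtain c d where c: "B.torus_coeffs c" "x = lincomb B.tmon c" and d: "B.torus_coeffs d" "y = lincomb B.tmon d"
    using assms unfolding B.torus_def by blast
  have fin: "finite (supp c)" "finite (supp d)"
    using c d by (simp_all add: B.torus_coeffs_def)
  have "transfer (x + y) = transfer (lincomb B.tmon (\<lambda>p. c p + d p))"
    using c d by (simp add: B.lincomb_tmon_add)
  also have "\<dots> = lincomb transfer_tmon (\<lambda>p. c p + d p)"
    using c d by (simp add: transfer_lincomb B.torus_coeffs_add)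
  also have "\<dots> = transfer x + transfer y"
    using c d fin by (simp add: lincomb_add transfer_lincomb)
  finally show "transfer (x + y) = transfer x + transfer y" .
  have "transfer (x * y) = transfer (lincomb B.tmon (convolution B.tmon_index_mult c d))"
    using c d by (simp add: B.lincomb_tmon_mult)
  also have "\<dots> = lincomb transfer_tmon (convolution B.tmon_index_mult c d)"
    using c d by (simp add: transfer_lincomb B.torus_coeffs_convolution)
  also have "\<dots> = transfer x * transfer y"
    using c d fin by (simp add: lincomb_mult transfer_tmon_mult transfer_lincomb)
  finally show "transfer (x * y) = transfer x * transfer y" .
qed

lemma transfer_nonzero:
  assumes "x \<in> B.torus" "x \<noteq> 0"
  shows "transfer x \<noteq> 0"
proof
  obtain c where c: "B.torus_coeffs c" "x = lincomb B.tmon c"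
    using assms(1) unfolding B.torus_def by blast
  assume "transfer x = 0"
  then have "c = (\<lambda>_. 0)"
    using c by (intro lincomb_transfer_tmon_eq_0) (simp_all add: transfer_lincomb)
  then show False
    using c assms(2) by (simp add: lincomb_def)
qed

lemma transfer_right_ore_hom: "right_ore_hom B.torus transfer"
proof
  show "transfer 1 = 1"
    using transfer_tmon[OF A.Zm_zero, of 0] B.tmon_scalar[of 0] by (simp add: mulv_zero A.Xmon_zero)
  show "\<exists>u c. u \<in> B.torus \<and> c \<in> B.torus \<and> u \<noteq> 0 \<and> a * u = s * c"
    if "a \<in> B.torus" "s \<in> B.torus" "s \<noteq> 0" for a s
    using that by (rule B.torus_right_ore)
qed (simp_all add: B.one_in_torus B.torus_add B.torus_mult B.torus_uminus transfer_add_mult transfer_nonzero)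

lemma monomial_iso_exists:
  "\<exists>\<phi>. alg_iso vb va \<phi> \<and> (\<forall>\<alpha>\<in>Zm m. \<phi> (B.mon \<alpha>) = A.mon (mulv m (E e) \<alpha>))"
proof -
  interpret T: right_ore_hom B.torus transfer
    by (rule transfer_right_ore_hom)
  have "T.fractions = UNIV"
    by (rule qtorus_frac_generated[OF torus_b])
      (auto intro: T.mem_fractions T.zero_mem T.fractions_closed B.one_in_torus B.v_in_torus B.X_in_torus)
  then have hom: "division_ring_hom T.ext"
    by (rule T.ext_hom)
  interpret division_ring_hom T.ext
    by (fact hom)
  have ext_mon: "T.ext (B.mon \<alpha>) = A.mon (mulv m (E e) \<alpha>)" if "\<alpha> \<in> Zm m" for \<alpha>
    using T.ext_on_T[OF B.Xmon_in_torus[OF that]] transfer_tmon[OF that, of 0] by (simp add: B.tmon_def)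
  have ext_v: "T.ext vb = va"
    using T.ext_on_T[OF B.v_in_torus] transfer_tmon[OF A.Zm_zero, of 1] B.tmon_scalar[of 1]
    by (simp add: mulv_zero A.Xmon_zero)
  have "surj T.ext"
  proof (rule qtorus_frac_hom_surjI[OF torus_a])
    show "X i \<in> range T.ext" if "i < m" for i
      using ext_mon[OF mulv_in_Zm[of "E e" "unitvec i"]] that
      by (metis A.Xmon_unitvec A.unitvec_Zm Emat_involution rangeI)
  qed (use hom ext_v in \<open>metis rangeI\<close>)+
  then have "alg_iso vb va T.ext"
    using ext_v inj by (simp add: alg_iso_def alg_hom_def bij_def hom_add hom_mult hom_one)
  with ext_mon show ?thesis
    by blast
qed

end

lemma monomial_iso_unique:
  assumes "alg_iso vb va \<phi>1" "\<forall>\<alpha>\<in>Zm m. \<phi>1 (B.mon \<alpha>) = A.mon (mulv m (E e) \<alpha>)"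
    and "alg_iso vb va \<phi>2" "\<forall>\<alpha>\<in>Zm m. \<phi>2 (B.mon \<alpha>) = A.mon (mulv m (E e) \<alpha>)"
  shows "\<phi>1 = \<phi>2"
proof (rule qtorus_frac_hom_eqI[OF torus_b])
  show "division_ring_hom \<phi>1" "division_ring_hom \<phi>2" "\<phi>1 vb = \<phi>2 vb"
    using assms(1,3) by (simp_all add: alg_iso_division_ring_hom alg_iso_param)
  show "\<phi>1 (X' i) = \<phi>2 (X' i)" if "i < m" for i
    using assms(2,4) A.unitvec_Zm[OF that] B.Xmon_unitvec[OF that] by metis
qed

end


section \<open>The mutation as the monomial isomorphism followed by \<open>\<psi>\<close>\<close>

lemma hpow_1: "hpow v R hk d z 1 = (\<Sum>s\<le>R. lev v (hk s) * (v powi d * z) ^ s)"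
  and hpow_minus_1: "hpow v R hk d z (-1) = inverse (\<Sum>s\<le>R. lev v (hk s) * (v powi (- d) * z) ^ s)"
  by (simp_all add: hpow_def upto.simps)

lemma sum_atMost_reflect: "(\<Sum>s\<le>(R::nat). g (R - s)) = (\<Sum>s\<le>R. g s)"
  by (rule sum.reindex_bij_witness[where i = "\<lambda>s. R - s" and j = "\<lambda>s. R - s"]) auto

lemma (in quantum_torus) central_lev: "central (lev v c)"
  by (simp add: lev_def)

locale mutation_step = mutation_tori +
  fixes h :: "nat \<Rightarrow> nat \<Rightarrow> int \<Rightarrow> int" and \<mu> :: "'b \<Rightarrow> 'a"
  assumes mutation_data: "mutation_data n r h"
    and mu_iso: "alg_iso vb va \<mu>"
    and mu_X: "\<And>i. i < m \<Longrightarrow> i \<noteq> k \<Longrightarrow> \<mu> (B.mon (unitvec i)) = A.mon (unitvec i)"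
    and mu_X_k: "\<mu> (B.mon (unitvec k)) =
           (\<Sum>s\<le>r k. lev va (h k s) *
              A.mon (\<lambda>j. int s * pospart b j + int (r k - s) * pospart (\<lambda>i. - b i) j - unitvec k j))"
begin

definition exchange_exp :: "nat \<Rightarrow> nat \<Rightarrow> int" where
  "exchange_exp s = (\<lambda>j. int s * pospart b j + int (r k - s) * pospart (\<lambda>i. - b i) j - unitvec k j)"

lemma mu_X_k_exchange: "\<mu> (X' k) = (\<Sum>s\<le>r k. lev va (h k s) * A.mon (exchange_exp s))"
  using mu_X_k B.Xmon_unitvec[OF k_less_m] by (simp add: exchange_exp_def)

lemma exchange_exp_k: "exchange_exp s k = -1"
  using B_kk k_less_m by (simp add: exchange_exp_def pospart_def col_def unitvec_def)

lemma exchange_exp_in_Zm: "exchange_exp s \<in> Zm m"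
  using k_less_m by (simp add: Zm_def exchange_exp_def pospart_def col_def unitvec_def)

lemma exchange_exp_plus:
  "s \<le> r k \<Longrightarrow> (\<lambda>i. mulv m (E 1) (unitvec k) i + int s * b i) = exchange_exp s"
  by (rule ext) (auto simp: mulv_Emat exchange_exp_def pospart_def col_def unitvec_def B_kk k_less_m
      max_def algebra_simps of_nat_diff zero_le_mult_iff mult_le_0_iff)

lemma exchange_exp_minus:
  "s \<le> r k \<Longrightarrow> (\<lambda>i. mulv m (E (-1)) (unitvec k) i - int s * b i) = exchange_exp (r k - s)"
  by (rule ext) (auto simp: mulv_Emat exchange_exp_def pospart_def col_def unitvec_def B_kk k_less_m
      max_def algebra_simps of_nat_diff zero_le_mult_iff mult_le_0_iff)

lemma h_palindromic: "s \<le> r k \<Longrightarrow> h k s = h k (r k - s)"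
  using mutation_data k_less_n unfolding mutation_data_def by blast

lemma Xmon_mult_exchange_poly:
  assumes "\<beta> k = -1"
  shows "A.mon \<beta> * (\<Sum>s\<le>r k. lev va (h k s) * (va powi (t * \<delta> k) * A.mon (\<lambda>i. - t * b i)) ^ s)
       = (\<Sum>s\<le>r k. lev va (h k s) * A.mon (\<lambda>i. \<beta> i - int s * t * b i))"
proof -
  have "bform m \<Lambda> \<beta> (\<lambda>i. - t * b i) = - (t * \<delta> k)"
    using bform_scale_right[where c = "- t"] bform_col[of \<beta>] assms by simp
  then show ?thesis
    using A.Xmon_mult_poly[where L = "\<lambda>s. lev va (h k s)" and \<beta> = \<beta> and R = "r k" and e = "t * \<delta> k"
        and \<gamma> = "\<lambda>i. - t * b i", OF A.central_lev]
    by (simp add: algebra_simps)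
qed

context
  fixes \<epsilon> :: int and \<psi> :: "'a \<Rightarrow> 'a"
  assumes psi: "is_psi va m \<Lambda> X B \<delta> r h k \<epsilon> \<psi>"
begin

lemma psi_hom: "division_ring_hom \<psi>"
  and psi_v: "\<psi> va = va"
  using psi alg_iso_division_ring_hom alg_iso_param unfolding is_psi_def by blast+

lemma psi_Xmon:
  "\<beta> \<in> Zm m \<Longrightarrow>
     \<psi> (A.mon \<beta>) = A.mon \<beta> * inverse (hpow va (r k) (h k) (\<delta> k) (A.mon (\<lambda>i. \<epsilon> * b i)) (\<epsilon> * \<beta> k))"
  using psi by (simp add: is_psi_def)

lemma psi_X: "i < m \<Longrightarrow> i \<noteq> k \<Longrightarrow> \<psi> (A.mon (unitvec i)) = A.mon (unitvec i)"
  using psi_Xmon[OF A.unitvec_Zm] by (simp add: unitvec_def hpow_def)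

lemma psi_plus_Xmon_Emat:
  assumes "\<epsilon> = 1"
  shows "\<psi> (A.mon (mulv m (E 1) (unitvec k))) = \<mu> (X' k)"
proof -
  let ?\<beta> = "mulv m (E 1) (unitvec k)"
  have "\<psi> (A.mon ?\<beta>) = A.mon ?\<beta> * (\<Sum>s\<le>r k. lev va (h k s) * (va powi (- 1 * \<delta> k) * A.mon (\<lambda>i. - (- 1) * b i)) ^ s)"
    using assms psi_Xmon[OF mulv_in_Zm] mulv_Emat_unitvec_k by (simp add: hpow_minus_1)
  also have "\<dots> = (\<Sum>s\<le>r k. lev va (h k s) * A.mon (exchange_exp s))"
    using Xmon_mult_exchange_poly[where \<beta> = "mulv m (E 1) (unitvec k)" and t = "-1", OF mulv_Emat_unitvec_k] exchange_exp_plus by simp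
  finally show ?thesis
    by (simp add: mu_X_k_exchange)
qed

lemma psi_minus_mu_X_k:
  assumes "\<epsilon> = -1"
  shows "\<psi> (\<mu> (X' k)) = A.mon (mulv m (E (-1)) (unitvec k))"
proof -
  interpret division_ring_hom \<psi>
    by (rule psi_hom)
  let ?\<beta> = "mulv m (E (-1)) (unitvec k)"
  let ?P = "\<Sum>s\<le>r k. lev va (h k s) * (va powi (1 * \<delta> k) * A.mon (\<lambda>i. - 1 * b i)) ^ s"
  have "\<psi> (\<mu> (X' k)) = (\<Sum>s\<le>r k. lev va (h k s) * (A.mon (exchange_exp s) * inverse ?P))"
    using assms psi_Xmon[OF exchange_exp_in_Zm] exchange_exp_k
    by (simp add: mu_X_k_exchange hom_sum hom_mult hom_lev psi_v hpow_1)
  also have "\<dots> = \<mu> (X' k) * inverse ?P"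
    by (simp add: mu_X_k_exchange sum_distrib_right mult.assoc)
  finally have psi_mu: "\<psi> (\<mu> (X' k)) = \<mu> (X' k) * inverse ?P" .
  have "A.mon ?\<beta> * ?P = (\<Sum>s\<le>r k. lev va (h k s) * A.mon (exchange_exp (r k - s)))"
    using Xmon_mult_exchange_poly[where \<beta> = ?\<beta> and t = 1, OF mulv_Emat_unitvec_k] exchange_exp_minus
    by simp
  also have "\<dots> = (\<Sum>s\<le>r k. lev va (h k (r k - s)) * A.mon (exchange_exp (r k - s)))"
    by (intro sum.cong refl) (metis atMost_iff h_palindromic)
  also have "\<dots> = \<mu> (X' k)"
    unfolding mu_X_k_exchange by (rule sum_atMost_reflect)
  finally have eq: "A.mon ?\<beta> * ?P = \<mu> (X' k)" .
  have "\<mu> (X' k) \<noteq> 0"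
    using division_ring_hom.hom_nonzero[OF alg_iso_division_ring_hom[OF mu_iso]] B.X_nonzero[OF k_less_m]
    by blast
  with eq have "?P \<noteq> 0"
    by auto
  with eq have "\<mu> (X' k) * inverse ?P = A.mon ?\<beta>"
    by (simp add: mult.assoc flip: eq)
  with psi_mu show ?thesis
    by simp
qed

context
  fixes \<phi> :: "'b \<Rightarrow> 'a"
  assumes phi: "alg_iso vb va \<phi>" "\<forall>\<alpha>\<in>Zm m. \<phi> (B.mon \<alpha>) = A.mon (mulv m (E \<epsilon>) \<alpha>)"
begin

lemma phi_X: "i < m \<Longrightarrow> \<phi> (X' i) = A.mon (mulv m (E \<epsilon>) (unitvec i))"
  using phi(2) A.unitvec_Zm B.Xmon_unitvec by metis

lemma homs: "division_ring_hom \<mu>" "division_ring_hom \<phi>" "division_ring_hom \<psi>"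
  and params: "\<mu> vb = va" "\<phi> vb = va" "\<psi> va = va"
  using mu_iso phi(1) psi_hom psi_v by (simp_all add: alg_iso_division_ring_hom alg_iso_param)

lemma X_fixed: "i < m \<Longrightarrow> i \<noteq> k \<Longrightarrow> \<mu> (X' i) = X i \<and> \<phi> (X' i) = X i \<and> \<psi> (X i) = X i"
  using mu_X phi_X psi_X by (simp add: B.Xmon_unitvec A.Xmon_unitvec mulv_Emat_unitvec)

lemma mu_eq_psi_comp_phi: "\<epsilon> = 1 \<Longrightarrow> \<mu> = \<psi> \<circ> \<phi>"
  using X_fixed phi_X[OF k_less_m] psi_plus_Xmon_Emat
  by (intro qtorus_frac_hom_eqI[OF torus_b homs(1) division_ring_hom_comp[OF homs(3,2)]])
    (auto simp: params, metis)

lemma psi_comp_mu_eq_phi: "\<epsilon> = -1 \<Longrightarrow> \<psi> \<circ> \<mu> = \<phi>"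
  using X_fixed phi_X[OF k_less_m] psi_minus_mu_X_k
  by (intro qtorus_frac_hom_eqI[OF torus_b division_ring_hom_comp[OF homs(3,1)] homs(2)])
    (auto simp: params, metis)

lemma mutation_factorization:
  assumes "\<epsilon> = 1 \<or> \<epsilon> = -1"
  shows "\<mu> = (if \<epsilon> = 1 then \<psi> else inv \<psi>) \<circ> \<phi>"
proof (cases "\<epsilon> = 1")
  case False
  with assms have "\<psi> \<circ> \<mu> = \<phi>"
    by (simp add: psi_comp_mu_eq_phi)
  moreover have "inj \<psi>"
    using psi by (simp add: is_psi_def alg_iso_def bij_is_inj)
  ultimately show ?thesis
    using False by (auto simp: fun_eq_iff) (metis inv_f_f)
qed (simp add: mu_eq_psi_comp_phi)

end

end

end

theorem mainTheorem9:
  fixes m n k :: nat and \<epsilon> :: int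
    and r :: "nat \<Rightarrow> nat" and h :: "nat \<Rightarrow> nat \<Rightarrow> int \<Rightarrow> int"
    and B \<Lambda> \<Lambda>' :: "nat \<Rightarrow> nat \<Rightarrow> int" and \<delta> :: "nat \<Rightarrow> int"
    and va :: "'a::division_ring" and X :: "nat \<Rightarrow> 'a"
    and vb :: "'b::division_ring" and X' :: "nat \<Rightarrow> 'b"
    and \<mu> :: "'b \<Rightarrow> 'a"
  assumes "1 \<le> n" and "n \<le> m" and "k < n"
    and "\<epsilon> = 1 \<or> \<epsilon> = -1"
    and "mutation_data n r h"
    and "compatible_pair m n B \<Lambda> \<delta>"
    and "qtorus_frac va m \<Lambda> X"
    and "\<forall>i<m. \<forall>j<m. \<Lambda>' i j = matmul m (transp (Emat B r k 1)) (matmul m \<Lambda> (Emat B r k 1)) i j"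
    and "qtorus_frac vb m \<Lambda>' X'"
    and "alg_iso vb va \<mu>"
    and "\<forall>i<m. i \<noteq> k \<longrightarrow> \<mu> (Xmon vb m \<Lambda>' X' (unitvec i)) = Xmon va m \<Lambda> X (unitvec i)"
    and "\<mu> (Xmon vb m \<Lambda>' X' (unitvec k)) =
           (\<Sum>s\<le>r k. lev va (h k s) *
              Xmon va m \<Lambda> X (\<lambda>j. int s * pospart (col m B k) j
                                 + int (r k - s) * pospart (\<lambda>i. - col m B k i) j - unitvec k j))"
  shows "(\<exists>!\<phi>. alg_iso vb va \<phi> \<and>
             (\<forall>\<alpha>\<in>Zm m. \<phi> (Xmon vb m \<Lambda>' X' \<alpha>) = Xmon va m \<Lambda> X (mulv m (Emat B r k \<epsilon>) \<alpha>)))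
       \<and> (\<forall>\<phi> \<psi>. alg_iso vb va \<phi> \<and>
             (\<forall>\<alpha>\<in>Zm m. \<phi> (Xmon vb m \<Lambda>' X' \<alpha>) = Xmon va m \<Lambda> X (mulv m (Emat B r k \<epsilon>) \<alpha>)) \<and>
             is_psi va m \<Lambda> X B \<delta> r h k \<epsilon> \<psi>
           \<longrightarrow> \<mu> = (if \<epsilon> = 1 then \<psi> else inv \<psi>) \<circ> \<phi>)"
proof -
  interpret mutation_step m n k r B \<Lambda> \<Lambda>' \<delta> va X vb X' h \<mu>
    by unfold_locales (use assms in auto)
  show ?thesis
    using monomial_iso_exists[OF assms(4)] monomial_iso_unique mutation_factorization[OF _ _ _ assms(4)]
    by blast
qed

end
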